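(* Consider the $(1,\lambda)$-CSA-ES without cumulation ($c=1$), with $d_\sigma>0$, applied to $f(x)=[x]_1$ on $\mathbb{R}^n$. If $\lambda\ge3$, the step-size diverges geometrically almost surely and in expectation: almost surely $$\frac1t\ln\Big(\frac{\sigma_t}{\sigma_0}\Big)\xrightarrow[t\to\infty]{}\mathbb{E}\Big(\ln\Big(\frac{\sigma_{t+1}}{\sigma_t}\Big)\Big)=\frac{1}{2d_\sigma n}\big(\mathbb{E}(\mathcal{N}_{1:\lambda}^2)-1\big),$$ and this rate is strictly positive. If $\lambda=1$ or $\lambda=2$, then $\ln\sigma_{t+1}=\ln\sigma_t+W_t$ where $\mathbb{E}(W_t)=0$ (an additive unbiased random walk on $\ln\sigma_t$); more precisely $W_t$ is distributed as $\frac{1}{2d_\sigma}(\chi^2_n/n-1)$ for $\lambda=1$, and as $\frac{1}{2d_\sigma}\big((\mathcal{N}_{1:2}^2+\chi^2_{n-1})/n-1\big)$ for $\lambda=2$ (with $\mathcal{N}_{1:2}$ and $\chi^2_{n-1}$ independent), where $\chi^2_k$ denotes a chi-squared random variable with $k$ degrees of freedom.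
   Context: For $x\in\mathbb{R}^n$, $[x]_i$ denotes its $i$-th coordinate. The $(1,\lambda)$-CSA-ES with parameters $\lambda\ge1$, $0<c\le1$, $d_\sigma>0$, minimizing $f:\mathbb{R}^n\to\mathbb{R}$, is defined as follows. Start from $X_0\in\mathbb{R}^n$, $\sigma_0>0$, and $p_0\sim\mathcal{N}(0,I_n)$. At iteration $t$, draw $\xi_{t,1},\ldots,\xi_{t,\lambda}$ i.i.d. $\sim\mathcal{N}(0,I_n)$, independent of everything before; the children are $Y_{t,i}=X_t+\sigma_t\xi_{t,i}$. The next parent $X_{t+1}$ is the child with the smallest $f$-value, and $\xi^\star_t$ denotes the corresponding $\xi_{t,i}$, so that $X_{t+1}=X_t+\sigma_t\xi^\star_t$. The cumulative path is $p_{t+1}=(1-c)p_t+\sqrt{c(2-c)}\,\xi^\star_t$, and the step-size is updated as $\sigma_{t+1}=\sigma_t\exp\!\big(\tfrac{c}{2d_\sigma}(\|p_{t+1}\|^2/n-1)\big)$. For i.i.d. standard normal $\mathcal{N}_1,\ldots,\mathcal{N}_\lambda$, $\mathcal{N}_{1:\lambda}$ denotes their minimum. *)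

theory Defs
  imports "HOL-Probability.Probability"
begin

text \<open>A vector of R^n is represented as a function nat => real, of which
only the coordinates 0, ..., n-1 are meaningful; the paper's first coordinate [x]_1
is coordinate 0.  The lambda children of iteration t are indexed by i = 0, ..., lambda-1.
The noise of the algorithm is given as a realisation
  xi t i j  = j-th coordinate of xi_{t,i}.\<close>

definition std_normal_measure :: "real measure" where
  "std_normal_measure = density lborel (\<lambda>x. ennreal (std_normal_density x))"

definition std_normal_prod :: "nat \<Rightarrow> (nat \<Rightarrow> real) measure" where
  "std_normal_prod k = PiM {..<k} (\<lambda>_. std_normal_measure)"

definition E_min_normal_sq :: "nat \<Rightarrow> real" where
  "E_min_normal_sq lam =
     (\<integral>x. (Min ((\<lambda>i. x i) ` {..<lam}))\<^sup>2 \<partial>(std_normal_prod lam))"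

text \<open>The selected child is the one
with smallest f-value; ties (a null event) are broken by smallest index.\<close>
fun csa_es ::
  "nat \<Rightarrow> nat \<Rightarrow> real \<Rightarrow> real \<Rightarrow> ((nat \<Rightarrow> real) \<Rightarrow> real) \<Rightarrow>
   (nat \<Rightarrow> real) \<Rightarrow> real \<Rightarrow> (nat \<Rightarrow> real) \<Rightarrow> (nat \<Rightarrow> nat \<Rightarrow> nat \<Rightarrow> real) \<Rightarrow>
   nat \<Rightarrow> (nat \<Rightarrow> real) \<times> real \<times> (nat \<Rightarrow> real)" where
  "csa_es n lam c d f X0 s0 p0 xi 0 = (X0, s0, p0)"
| "csa_es n lam c d f X0 s0 p0 xi (Suc t) =
     (case csa_es n lam c d f X0 s0 p0 xi t of (X, s, p) \<Rightarrow>
       (let Y = (\<lambda>i j. X j + s * xi t i j);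
            k = (LEAST i. i < lam \<and> (\<forall>l<lam. f (Y i) \<le> f (Y l)));
            p' = (\<lambda>j. (1 - c) * p j + sqrt (c * (2 - c)) * xi t k j);
            s' = s * exp (c / (2 * d) * ((\<Sum>j<n. (p' j)\<^sup>2) / real n - 1))
        in (Y k, s', p')))"

definition csa_sigma ::
  "nat \<Rightarrow> nat \<Rightarrow> real \<Rightarrow> real \<Rightarrow> ((nat \<Rightarrow> real) \<Rightarrow> real) \<Rightarrow>
   (nat \<Rightarrow> real) \<Rightarrow> real \<Rightarrow> (nat \<Rightarrow> 'a \<Rightarrow> real) \<Rightarrow> (nat \<Rightarrow> nat \<Rightarrow> nat \<Rightarrow> 'a \<Rightarrow> real) \<Rightarrow>
   nat \<Rightarrow> 'a \<Rightarrow> real" where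
  "csa_sigma n lam c d f X0 s0 p0 xi t w =
     fst (snd (csa_es n lam c d f X0 s0 (\<lambda>j. p0 j w) (\<lambda>t i j. xi t i j w) t))"

text \<open>The whole noise family: Inl j is the j-th coordinate of p_0,
Inr (t,i,j) the j-th coordinate of xi_{t,i}.\<close>
definition noise_family ::
  "(nat \<Rightarrow> 'a \<Rightarrow> real) \<Rightarrow> (nat \<Rightarrow> nat \<Rightarrow> nat \<Rightarrow> 'a \<Rightarrow> real) \<Rightarrow>
   nat + (nat \<times> nat \<times> nat) \<Rightarrow> 'a \<Rightarrow> real" where
  "noise_family p0 xi k = (case k of Inl j \<Rightarrow> p0 j | Inr (t, i, j) \<Rightarrow> xi t i j)"

definition noise_index :: "nat \<Rightarrow> nat \<Rightarrow> (nat + (nat \<times> nat \<times> nat)) set" where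
  "noise_index n lam = Inl ` {..<n} \<union> Inr ` {(t, i, j). i < lam \<and> j < n}"

end

theory Submission
  imports Defs
begin

text \<open>With \<open>c = 1\<close> the path \<open>p\<^sub>t\<^sub>+\<^sub>1\<close> is the selected vector \<open>\<xi>\<^sup>\<star>\<^sub>t\<close> itself, so
\<open>ln \<sigma>\<^sub>t\<^sub>+\<^sub>1 - ln \<sigma>\<^sub>t = (\<parallel>\<xi>\<^sup>\<star>\<^sub>t\<parallel>\<^sup>2/n - 1)/(2 d\<^sub>\<sigma>)\<close> depends on the noise of iteration \<open>t\<close> only:
the increments are i.i.d.  Selection on \<open>f = [x]\<^sub>1\<close> looks only at first coordinates, hence
\<open>[\<xi>\<^sup>\<star>\<^sub>t]\<^sub>1 = \<N>\<^sub>1\<^sub>:\<^sub>\<lambda>\<close>, while the remaining \<open>n - 1\<close> coordinates of \<open>\<xi>\<^sup>\<star>\<^sub>t\<close> are still i.i.d.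
standard normal and independent of it.  This gives the law and the mean
\<open>(E \<N>\<^sub>1\<^sub>:\<^sub>\<lambda>\<^sup>2 - 1)/(2 d\<^sub>\<sigma> n)\<close> of the increments; the almost sure limit is the strong law of
large numbers, in its elementary version for bounded fourth moments.

The sign of the rate comes from the layer-cake formula \<open>E Z\<^sup>2 = \<integral>\<^sub>0\<^sup>\<infinity> 2x P(|Z| \<ge> x) dx\<close>:
with \<open>q = P(\<N> \<ge> x)\<close>, one has \<open>P(|\<N>\<^sub>1\<^sub>:\<^sub>\<lambda>| \<ge> x) - P(|\<N>| \<ge> x) = q\<^sup>\<lambda> + 1 - (1 - q)\<^sup>\<lambda> - 2q\<close>,
which vanishes identically for \<open>\<lambda> \<le> 2\<close> and is positive for \<open>\<lambda> \<ge> 3\<close> and \<open>0 < q < 1/2\<close>.\<close>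

section \<open>Independence and standard normal laws\<close>

lemma prob_space_std_normal_measure: "prob_space std_normal_measure"
  unfolding std_normal_measure_def
  using prob_space_normal_density[of 1 0] by simp

lemma integrable_std_normal_measure_power: "integrable std_normal_measure (\<lambda>x. x ^ k)"
  unfolding std_normal_measure_def
  by (subst integrable_density) (auto simp: integrable_std_normal_moment)

lemma integral_std_normal_measure_square: "(\<integral>x. x\<^sup>2 \<partial>std_normal_measure) = 1"
proof -
  have "(\<integral>x. x\<^sup>2 \<partial>std_normal_measure) = (\<integral>x. std_normal_density x * x ^ (2 * 1) \<partial>lborel)"
    unfolding std_normal_measure_def by (subst integral_density) auto
  also have "\<dots> = 1" by (subst integral_std_normal_moment_even) simp
  finally show ?thesis .
qed

lemma emeasure_std_normal_measure_pos:
  assumes A: "A \<in> sets borel" and pos: "emeasure lborel A > 0"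
  shows "emeasure std_normal_measure A > 0"
proof (rule ccontr)
  assume "\<not> emeasure std_normal_measure A > 0"
  then have "(\<integral>\<^sup>+x. ennreal (std_normal_density x) * indicator A x \<partial>lborel) = 0"
    unfolding std_normal_measure_def using A by (simp add: emeasure_density zero_less_iff_neq_zero)
  then have "AE x in lborel. ennreal (std_normal_density x) * indicator A x = 0"
    using A by (subst (asm) nn_integral_0_iff_AE) auto
  moreover have "\<And>x. std_normal_density x \<noteq> 0"
    using normal_density_pos[of 1] by (metis less_irrefl zero_less_one)
  ultimately have "AE x in lborel. x \<notin> A"
    by (elim eventually_mono) (auto simp: indicator_def split: if_splits)
  then have "emeasure lborel A = 0"
    using A by (subst (asm) AE_iff_measurable[of A]) auto
  then show False using pos by simp
qed

context prob_space begin

lemma indep_sets_reindex: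
  assumes "indep_sets F I" "inj_on \<phi> K" "\<phi> ` K \<subseteq> I"
  shows "indep_sets (\<lambda>k. F (\<phi> k)) K"
proof (rule indep_setsI)
  fix k assume "k \<in> K" then show "F (\<phi> k) \<subseteq> events"
    using assms unfolding indep_sets_def by auto
next
  fix A J assume J: "J \<noteq> {}" "J \<subseteq> K" "finite J" and A: "\<forall>j\<in>J. A j \<in> F (\<phi> j)"
  define B where "B = (\<lambda>i. A (inv_into J \<phi> i))"
  have inj: "inj_on \<phi> J" using assms(2) J(2) inj_on_subset by blast
  have B_\<phi>: "\<And>j. j \<in> J \<Longrightarrow> B (\<phi> j) = A j" unfolding B_def using inj by simp
  have "prob (\<Inter>i\<in>\<phi>`J. B i) = (\<Prod>i\<in>\<phi>`J. prob (B i))"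
  proof (rule indep_setsD[OF assms(1)])
    show "\<phi> ` J \<subseteq> I" using J(2) assms(3) by blast
    show "\<phi> ` J \<noteq> {}" using J(1) by blast
    show "finite (\<phi> ` J)" using J(3) by blast
    show "\<forall>j\<in>\<phi> ` J. B j \<in> F j" using A B_\<phi> by force
  qed
  moreover have "(\<Inter>i\<in>\<phi>`J. B i) = (\<Inter>j\<in>J. A j)" using B_\<phi> by auto
  moreover have "(\<Prod>i\<in>\<phi>`J. prob (B i)) = (\<Prod>j\<in>J. prob (A j))"
    using B_\<phi> by (simp add: prod.reindex[OF inj])
  ultimately show "prob (\<Inter>j\<in>J. A j) = (\<Prod>j\<in>J. prob (A j))" by simp
qed

lemma indep_vars_reindex:
  assumes "indep_vars M' X I" "inj_on \<phi> K" "\<phi> ` K \<subseteq> I"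
  shows "indep_vars (\<lambda>k. M' (\<phi> k)) (\<lambda>k. X (\<phi> k)) K"
  using assms indep_sets_reindex[where F="\<lambda>i. {X i -` A \<inter> space M |A. A \<in> sets (M' i)}"]
  unfolding indep_vars_def2 by blast

lemma distr_eq_std_normal_measure:
  assumes "distributed M lborel X (\<lambda>x. ennreal (std_normal_density x))"
  shows "distr M borel X = std_normal_measure"
proof -
  have X: "X \<in> borel_measurable M" using assms by (auto simp: distributed_def)
  have "distr M borel X = distr M lborel X"
    by (rule measure_eqI) (simp_all add: emeasure_distr X)
  also have "\<dots> = std_normal_measure" using assms
    by (simp add: distributed_def std_normal_measure_def)
  finally show ?thesis .
qed

lemma distr_restrict_std_normal_eq_PiM:
  assumes "finite K" "K \<noteq> {}" "indep_vars (\<lambda>_. borel) Z K"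
    and "\<And>k. k \<in> K \<Longrightarrow> distributed M lborel (Z k) (\<lambda>x. ennreal (std_normal_density x))"
  shows "distr M (PiM K (\<lambda>_. borel)) (\<lambda>w. \<lambda>k\<in>K. Z k w) = PiM K (\<lambda>_. std_normal_measure)"
proof -
  have rv: "\<And>k. k \<in> K \<Longrightarrow> random_variable borel (Z k)"
    using assms(4) by (auto simp: distributed_def)
  have "distr M (PiM K (\<lambda>_. borel)) (\<lambda>w. \<lambda>k\<in>K. Z k w) = PiM K (\<lambda>k. distr M borel (Z k))"
    using indep_vars_iff_distr_eq_PiM'[OF assms(2) rv] assms(3) by simp
  also have "\<dots> = PiM K (\<lambda>_. std_normal_measure)"
    by (rule PiM_cong) (simp_all add: distr_eq_std_normal_measure assms(4))
  finally show ?thesis .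
qed

lemma integrable_std_normal_power:
  assumes "distributed M lborel X (\<lambda>x. ennreal (std_normal_density x))"
  shows "integrable M (\<lambda>w. X w ^ k)"
proof -
  have "integrable (distr M borel X) (\<lambda>x. x ^ k)"
    using distr_eq_std_normal_measure[OF assms] integrable_std_normal_measure_power by simp
  then show ?thesis using assms by (simp add: integrable_distr_eq distributed_def)
qed

lemma expectation_std_normal_square:
  assumes "distributed M lborel X (\<lambda>x. ennreal (std_normal_density x))"
  shows "expectation (\<lambda>w. (X w)\<^sup>2) = 1"
proof -
  have "expectation (\<lambda>w. (X w)\<^sup>2) = (\<integral>x. x\<^sup>2 \<partial>distr M borel X)"
    using assms by (simp add: integral_distr distributed_def)
  then show ?thesis
    using distr_eq_std_normal_measure[OF assms] integral_std_normal_measure_square by simp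
qed

text \<open>Choosing among identically distributed random elements \<open>V i\<close> by an index that every
\<open>V i\<close> determines in the same way (through \<open>S\<close>) does not change the law.\<close>

lemma distr_select_eq:
  assumes I: "finite I" "I \<noteq> {}"
    and V: "\<And>i. i \<in> I \<Longrightarrow> V i \<in> measurable M N"
    and VP: "\<And>i. i \<in> I \<Longrightarrow> distr M N (V i) = P"
    and S: "S \<in> measurable N (count_space I)"
    and s: "\<And>w. w \<in> space M \<Longrightarrow> s w \<in> I"
    and SV: "\<And>w i. w \<in> space M \<Longrightarrow> i \<in> I \<Longrightarrow> S (V i w) = s w"
    and Vs: "Vs \<in> measurable M N" "\<And>w. w \<in> space M \<Longrightarrow> Vs w = V (s w) w"
  shows "distr M N Vs = P"
proof -
  obtain i0 where "i0 \<in> I" using I by auto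
  then have sets_P: "sets P = sets N" using VP by (metis sets_distr)
  show ?thesis
  proof (rule measure_eqI)
    fix A assume "A \<in> sets (distr M N Vs)"
    then have A: "A \<in> sets N" by simp
    define B where "B i = A \<inter> (S -` {i} \<inter> space N)" for i
    have B: "B i \<in> sets N" if "i \<in> I" for i
      using measurable_sets[OF S, of "{i}"] that A by (simp add: B_def sets.Int)
    have "Vs -` A \<inter> space M = (\<Union>i\<in>I. V i -` B i \<inter> space M)"
    proof (intro equalityI subsetI)
      fix w assume w: "w \<in> Vs -` A \<inter> space M"
      then have "V (s w) w \<in> space N" using V[OF s] by (auto simp: measurable_def)
      then show "w \<in> (\<Union>i\<in>I. V i -` B i \<inter> space M)"
        using w s SV Vs(2) by (auto simp: B_def intro!: bexI[of _ "s w"])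
    qed (use SV Vs(2) in \<open>auto simp: B_def\<close>)
    then have "emeasure (distr M N Vs) A = emeasure M (\<Union>i\<in>I. V i -` B i \<inter> space M)"
      using A Vs(1) by (simp add: emeasure_distr)
    also have "\<dots> = (\<Sum>i\<in>I. emeasure M (V i -` B i \<inter> space M))"
    proof (rule sum_emeasure[symmetric])
      show "(\<lambda>i. V i -` B i \<inter> space M) ` I \<subseteq> sets M"
        using V B by (auto intro!: measurable_sets)
      show "disjoint_family_on (\<lambda>i. V i -` B i \<inter> space M) I"
        unfolding disjoint_family_on_def using SV by (auto simp: B_def)
    qed (use I in auto)
    also have "\<dots> = (\<Sum>i\<in>I. emeasure P (B i))"
    proof (rule sum.cong[OF refl])
      fix i assume "i \<in> I"
      then show "emeasure M (V i -` B i \<inter> space M) = emeasure P (B i)"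
        using VP[of i, symmetric] by (simp add: emeasure_distr V B)
    qed
    also have "\<dots> = emeasure P (\<Union>i\<in>I. B i)"
      using I B sets_P by (intro sum_emeasure) (auto simp: disjoint_family_on_def B_def)
    also have "(\<Union>i\<in>I. B i) = A"
      using S sets.sets_into_space[OF A] by (auto simp: B_def measurable_def)
    finally show "emeasure (distr M N Vs) A = emeasure P A" .
  qed (use sets_P in simp)
qed

end

section \<open>A strong law of large numbers under bounded fourth moments\<close>

lemma abs_power_le_one_plus_power4:
  fixes z :: real assumes "k \<le> 4" shows "\<bar>z\<bar> ^ k \<le> 1 + z ^ 4"
proof (cases "\<bar>z\<bar> \<le> 1")
  case True
  then have "\<bar>z\<bar> ^ k \<le> 1" by (intro power_le_one) auto
  moreover have "0 \<le> z ^ 4" by (simp add: zero_le_even_power)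
  ultimately show ?thesis by linarith
next
  case False
  then have "\<bar>z\<bar> ^ k \<le> \<bar>z\<bar> ^ 4" by (intro power_increasing assms) auto
  then show ?thesis by (simp add: power_even_abs_numeral)
qed

lemma power4_add_le: "((a::real) + b) ^ 4 \<le> 8 * (a ^ 4 + b ^ 4)"
proof -
  have "8 * (a ^ 4 + b ^ 4) - (a + b) ^ 4 = (a - b)\<^sup>2 * (5 * (a + b)\<^sup>2 + 2 * a\<^sup>2 + 2 * b\<^sup>2)"
    by (simp add: power2_eq_square power4_eq_xxxx algebra_simps)
  moreover have "0 \<le> (a - b)\<^sup>2 * (5 * (a + b)\<^sup>2 + 2 * a\<^sup>2 + 2 * b\<^sup>2)" by simp
  ultimately show ?thesis by linarith
qed

lemma sum_plus_one_power4_le: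
  fixes b :: "'i \<Rightarrow> real"
  assumes "finite K" "\<And>k. k \<in> K \<Longrightarrow> b k \<ge> 0"
  shows "((\<Sum>k\<in>K. b k) + 1) ^ 4 \<le> (real (card K) + 1) ^ 4 * (1 + (\<Sum>k\<in>K. b k ^ 4))"
proof -
  let ?m = "Max (insert 1 (b ` K))"
  have le_m: "\<And>k. k \<in> K \<Longrightarrow> b k \<le> ?m" "1 \<le> ?m" using assms(1) by auto
  have m4: "?m ^ 4 \<le> 1 + (\<Sum>k\<in>K. b k ^ 4)"
  proof -
    have "?m \<in> insert 1 (b ` K)" using assms(1) by (intro Max_in) auto
    then consider "?m = 1" | k where "k \<in> K" "?m = b k" by auto
    then show ?thesis
    proof cases
      case 2
      then have "b k ^ 4 \<le> (\<Sum>k\<in>K. b k ^ 4)" using assms by (intro member_le_sum) auto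
      then show ?thesis using 2 by simp
    qed (simp add: sum_nonneg)
  qed
  have "(\<Sum>k\<in>K. b k) \<le> (\<Sum>k\<in>K. ?m)" by (rule sum_mono) (use le_m in auto)
  then have "(\<Sum>k\<in>K. b k) + 1 \<le> (real (card K) + 1) * ?m" using le_m(2) by (simp add: algebra_simps)
  moreover have "0 \<le> (\<Sum>k\<in>K. b k) + 1" using assms by (simp add: sum_nonneg add_nonneg_pos)
  ultimately have "((\<Sum>k\<in>K. b k) + 1) ^ 4 \<le> ((real (card K) + 1) * ?m) ^ 4"
    by (rule power_mono)
  also have "\<dots> = (real (card K) + 1) ^ 4 * ?m ^ 4" by (simp add: power_mult_distrib)
  also have "\<dots> \<le> (real (card K) + 1) ^ 4 * (1 + (\<Sum>k\<in>K. b k ^ 4))"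
    by (rule mult_left_mono[OF m4]) simp
  finally show ?thesis .
qed

context prob_space begin

lemma integrable_power_le_4:
  fixes Z :: "'a \<Rightarrow> real"
  assumes "Z \<in> borel_measurable M" "integrable M (\<lambda>w. Z w ^ 4)" "k \<le> 4"
  shows "integrable M (\<lambda>w. Z w ^ k)"
proof (rule Bochner_Integration.integrable_bound)
  show "integrable M (\<lambda>w. 1 + Z w ^ 4)" using assms(2) by simp
  show "(\<lambda>w. Z w ^ k) \<in> borel_measurable M" using assms(1) by measurable
  have "\<And>w. 0 \<le> 1 + Z w ^ 4" by (simp add: add_nonneg_nonneg zero_le_even_power)
  then show "AE w in M. norm (Z w ^ k) \<le> norm (1 + Z w ^ 4)"
    using abs_power_le_one_plus_power4[OF assms(3)] by (simp add: power_abs)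
qed

lemma integrable_sum_power4:
  fixes Y :: "nat \<Rightarrow> 'a \<Rightarrow> real"
  assumes "\<And>s. Y s \<in> borel_measurable M" "\<And>s. integrable M (\<lambda>w. Y s w ^ 4)"
  shows "integrable M (\<lambda>w. (\<Sum>s<t. Y s w) ^ 4)"
proof (rule Bochner_Integration.integrable_bound)
  let ?bound = "\<lambda>w. (real t + 1) ^ 4 * (1 + (\<Sum>s<t. \<bar>Y s w\<bar> ^ 4))"
  show "integrable M ?bound"
    using assms(2) by (simp add: power_even_abs_numeral Bochner_Integration.integrable_sum)
  show "(\<lambda>w. (\<Sum>s<t. Y s w) ^ 4) \<in> borel_measurable M" using assms(1) by measurable
  show "AE w in M. norm ((\<Sum>s<t. Y s w) ^ 4) \<le> norm (?bound w)"
  proof (intro always_eventually allI)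
    fix w
    have "\<bar>\<Sum>s<t. Y s w\<bar> \<le> (\<Sum>s<t. \<bar>Y s w\<bar>) + 1"
      using sum_abs[of "\<lambda>s. Y s w" "{..<t}"] by linarith
    then have "\<bar>\<Sum>s<t. Y s w\<bar> ^ 4 \<le> ((\<Sum>s<t. \<bar>Y s w\<bar>) + 1) ^ 4" by (intro power_mono) auto
    also have "\<dots> \<le> ?bound w"
      using sum_plus_one_power4_le[of "{..<t}" "\<lambda>s. \<bar>Y s w\<bar>"] by simp
    finally show "norm ((\<Sum>s<t. Y s w) ^ 4) \<le> norm (?bound w)"
      by (simp add: power_abs)
  qed
qed

lemma AE_LIMSEQ_zero_if_summable_power4:
  fixes Z :: "nat \<Rightarrow> 'a \<Rightarrow> real"
  assumes [measurable]: "\<And>t. Z t \<in> borel_measurable M"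
    and integrable: "\<And>t. integrable M (\<lambda>w. Z t w ^ 4)"
    and summable: "summable (\<lambda>t. expectation (\<lambda>w. Z t w ^ 4))"
  shows "AE w in M. (\<lambda>t. Z t w) \<longlonglongrightarrow> 0"
proof -
  have "(\<integral>\<^sup>+w. (\<Sum>t. ennreal (Z t w ^ 4)) \<partial>M) = (\<Sum>t. \<integral>\<^sup>+w. ennreal (Z t w ^ 4) \<partial>M)"
    by (rule nn_integral_suminf) simp
  also have "\<dots> = (\<Sum>t. ennreal (expectation (\<lambda>w. Z t w ^ 4)))"
    by (subst nn_integral_eq_integral) (auto simp: integrable zero_le_even_power)
  also have "\<dots> = ennreal (\<Sum>t. expectation (\<lambda>w. Z t w ^ 4))"
    by (rule suminf_ennreal2[OF _ summable]) (simp add: integral_nonneg_AE zero_le_even_power)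
  finally have "AE w in M. (\<Sum>t. ennreal (Z t w ^ 4)) \<noteq> \<infinity>"
    by (intro nn_integral_PInf_AE) auto
  then show ?thesis
  proof (rule eventually_mono)
    fix w assume "(\<Sum>t. ennreal (Z t w ^ 4)) \<noteq> \<infinity>"
    then have "summable (\<lambda>t. Z t w ^ 4)"
      by (intro summable_suminf_not_top) (auto simp: zero_le_even_power)
    then have "(\<lambda>t. \<bar>root 4 (Z t w ^ 4)\<bar>) \<longlonglongrightarrow> \<bar>root 4 0\<bar>"
      by (intro tendsto_rabs tendsto_real_root summable_LIMSEQ_zero)
    moreover have "\<bar>root 4 (Z t w ^ 4)\<bar> = \<bar>Z t w\<bar>" for t by (rule root_abs_power) simp
    ultimately have "(\<lambda>t. \<bar>Z t w\<bar>) \<longlonglongrightarrow> 0" by simp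
    then show "(\<lambda>t. Z t w) \<longlonglongrightarrow> 0" by (rule tendsto_rabs_zero_cancel)
  qed
qed

context
  fixes Y :: "nat \<Rightarrow> 'a \<Rightarrow> real"
  assumes indep: "indep_vars (\<lambda>_. borel) Y UNIV"
    and centered: "\<And>t. expectation (Y t) = 0"
    and integrable_power4: "\<And>t. integrable M (\<lambda>w. Y t w ^ 4)"
begin

lemma measurable_indep_seq[measurable]: "Y t \<in> borel_measurable M"
  using indep by (simp add: indep_vars_def)

lemma integrable_indep_seq_power: "k \<le> 4 \<Longrightarrow> integrable M (\<lambda>w. Y t w ^ k)"
  using integrable_power_le_4[OF measurable_indep_seq integrable_power4] .

lemma integrable_partial_sum_power: "k \<le> 4 \<Longrightarrow> integrable M (\<lambda>w. (\<Sum>s<t. Y s w) ^ k)"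
  by (rule integrable_power_le_4[OF _ integrable_sum_power4]) (auto intro: integrable_power4)

lemma indep_var_partial_sum: "indep_var borel (\<lambda>w. \<Sum>s<t. Y s w) borel (Y t)"
proof -
  have "indep_var (PiM {..<t} (\<lambda>_. borel)) (\<lambda>w. restrict (\<lambda>i. Y i w) {..<t})
      (PiM {t} (\<lambda>_. borel)) (\<lambda>w. restrict (\<lambda>i. Y i w) {t})"
    by (rule indep_var_restrict[OF indep]) auto
  then have "indep_var borel ((\<lambda>v. \<Sum>s<t. v s) \<circ> (\<lambda>w. restrict (\<lambda>i. Y i w) {..<t}))
      borel ((\<lambda>v. v t) \<circ> (\<lambda>w. restrict (\<lambda>i. Y i w) {t}))"
    by (rule indep_var_compose) auto
  then show ?thesis by (simp add: comp_def)
qed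

lemma
  assumes "a \<le> 4" "b \<le> 4"
  shows expectation_partial_sum_times_power:
      "expectation (\<lambda>w. (\<Sum>s<t. Y s w) ^ a * Y t w ^ b) =
       expectation (\<lambda>w. (\<Sum>s<t. Y s w) ^ a) * expectation (\<lambda>w. Y t w ^ b)"
    and integrable_partial_sum_times_power:
      "integrable M (\<lambda>w. (\<Sum>s<t. Y s w) ^ a * Y t w ^ b)"
proof -
  have "indep_var borel ((\<lambda>x. x ^ a) \<circ> (\<lambda>w. \<Sum>s<t. Y s w)) borel ((\<lambda>x. x ^ b) \<circ> Y t)"
    by (rule indep_var_compose[OF indep_var_partial_sum]) auto
  then have "indep_var borel (\<lambda>w. (\<Sum>s<t. Y s w) ^ a) borel (\<lambda>w. Y t w ^ b)"
    by (simp add: comp_def)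
  from indep_var_lebesgue_integral[OF this] indep_var_integrable[OF this] assms
  show "expectation (\<lambda>w. (\<Sum>s<t. Y s w) ^ a * Y t w ^ b) =
       expectation (\<lambda>w. (\<Sum>s<t. Y s w) ^ a) * expectation (\<lambda>w. Y t w ^ b)"
    and "integrable M (\<lambda>w. (\<Sum>s<t. Y s w) ^ a * Y t w ^ b)"
    by (auto intro: integrable_partial_sum_power integrable_indep_seq_power)
qed

lemma expectation_partial_sum_Suc_square:
  "expectation (\<lambda>w. (\<Sum>s<Suc t. Y s w)\<^sup>2) =
   expectation (\<lambda>w. (\<Sum>s<t. Y s w)\<^sup>2) + expectation (\<lambda>w. (Y t w)\<^sup>2)"
proof -
  let ?S = "\<lambda>w. \<Sum>s<t. Y s w"
  have "(\<lambda>w. (\<Sum>s<Suc t. Y s w)\<^sup>2) =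
      (\<lambda>w. ?S w ^ 2 * Y t w ^ 0 + 2 * (?S w ^ 1 * Y t w ^ 1) + ?S w ^ 0 * Y t w ^ 2)"
    by (auto simp: power2_eq_square algebra_simps)
  then show ?thesis
    using integrable_partial_sum_times_power[of 2 0 t] integrable_partial_sum_times_power[of 1 1 t]
      integrable_partial_sum_times_power[of 0 2 t] expectation_partial_sum_times_power[of 1 1 t]
    by (simp add: centered prob_space)
qed

lemma expectation_partial_sum_Suc_power4:
  "expectation (\<lambda>w. (\<Sum>s<Suc t. Y s w) ^ 4) =
   expectation (\<lambda>w. (\<Sum>s<t. Y s w) ^ 4)
   + 6 * (expectation (\<lambda>w. (\<Sum>s<t. Y s w)\<^sup>2) * expectation (\<lambda>w. (Y t w)\<^sup>2))
   + expectation (\<lambda>w. Y t w ^ 4)"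
proof -
  let ?S = "\<lambda>w. \<Sum>s<t. Y s w"
  have "(\<lambda>w. (\<Sum>s<Suc t. Y s w) ^ 4) = (\<lambda>w. ?S w ^ 4 * Y t w ^ 0 + 4 * (?S w ^ 3 * Y t w ^ 1)
      + 6 * (?S w ^ 2 * Y t w ^ 2) + 4 * (?S w ^ 1 * Y t w ^ 3) + ?S w ^ 0 * Y t w ^ 4)"
    by (auto simp: power2_eq_square power3_eq_cube power4_eq_xxxx algebra_simps)
  moreover have "expectation ?S = 0"
    using integrable_indep_seq_power[of 1] by (simp add: Bochner_Integration.integral_sum centered)
  ultimately show ?thesis
    using integrable_partial_sum_times_power[of 4 0 t] integrable_partial_sum_times_power[of 3 1 t]
      integrable_partial_sum_times_power[of 2 2 t] integrable_partial_sum_times_power[of 1 3 t]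
      integrable_partial_sum_times_power[of 0 4 t] expectation_partial_sum_times_power[of 3 1 t]
      expectation_partial_sum_times_power[of 2 2 t] expectation_partial_sum_times_power[of 1 3 t]
    by (simp add: centered prob_space)
qed

lemma expectation_partial_sum_power4_le:
  assumes B2: "\<And>t. expectation (\<lambda>w. (Y t w)\<^sup>2) \<le> b2"
    and B4: "\<And>t. expectation (\<lambda>w. Y t w ^ 4) \<le> b4"
  shows "expectation (\<lambda>w. (\<Sum>s<t. Y s w) ^ 4) \<le> real t * b4 + 3 * (real t)\<^sup>2 * b2\<^sup>2"
proof -
  have EY2: "0 \<le> expectation (\<lambda>w. (Y t w)\<^sup>2)" for t by (simp add: integral_nonneg_AE)
  then have b2: "0 \<le> b2" using B2[of 0] by (meson order_trans)
  have ES2: "expectation (\<lambda>w. (\<Sum>s<t. Y s w)\<^sup>2) \<le> real t * b2" for t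
  proof (induction t)
    case (Suc t)
    then show ?case
      using B2[of t] unfolding expectation_partial_sum_Suc_square by (simp add: algebra_simps)
  qed simp
  show ?thesis
  proof (induction t)
    case (Suc t)
    have "expectation (\<lambda>w. (\<Sum>s<t. Y s w)\<^sup>2) * expectation (\<lambda>w. (Y t w)\<^sup>2) \<le> (real t * b2) * b2"
      by (intro mult_mono ES2 B2 EY2) (use b2 in auto)
    moreover have "real (Suc t) * b4 + 3 * (real (Suc t))\<^sup>2 * b2\<^sup>2 =
        real t * b4 + 3 * (real t)\<^sup>2 * b2\<^sup>2 + 6 * (real t * b2 * b2) + b4 + 3 * b2\<^sup>2"
      by (simp add: power2_eq_square algebra_simps)
    moreover have "0 \<le> 3 * b2\<^sup>2" by simp
    ultimately show ?case
      using Suc B4[of t] unfolding expectation_partial_sum_Suc_power4 by linarith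
  qed simp
qed

lemma strong_law_bounded_fourth_moment:
  assumes B2: "\<And>t. expectation (\<lambda>w. (Y t w)\<^sup>2) \<le> b2"
    and B4: "\<And>t. expectation (\<lambda>w. Y t w ^ 4) \<le> b4"
  shows "AE w in M. (\<lambda>t. (\<Sum>s<t. Y s w) / real t) \<longlonglongrightarrow> 0"
proof (rule AE_LIMSEQ_zero_if_summable_power4)
  show "integrable M (\<lambda>w. ((\<Sum>s<t. Y s w) / real t) ^ 4)" for t
    using integrable_partial_sum_power[of 4 t] by (simp add: power_divide)
  have "0 \<le> expectation (\<lambda>w. Y 0 w ^ 4)" by (simp add: integral_nonneg_AE zero_le_even_power)
  then have b4: "0 \<le> b4" using B4[of 0] by linarith
  let ?C = "b4 + 3 * b2\<^sup>2"
  have "norm (expectation (\<lambda>w. ((\<Sum>s<t. Y s w) / real t) ^ 4)) \<le> ?C * inverse (real t ^ 2)"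
    if "t \<ge> 1" for t
  proof -
    have "expectation (\<lambda>w. ((\<Sum>s<t. Y s w) / real t) ^ 4) =
        expectation (\<lambda>w. (\<Sum>s<t. Y s w) ^ 4) / real t ^ 4"
      by (simp add: power_divide)
    also have "\<dots> \<le> (real t * b4 + 3 * (real t)\<^sup>2 * b2\<^sup>2) / real t ^ 4"
      by (intro divide_right_mono expectation_partial_sum_power4_le B2 B4) simp
    also have "\<dots> \<le> ((real t)\<^sup>2 * b4 + 3 * (real t)\<^sup>2 * b2\<^sup>2) / real t ^ 4"
      using that b4 by (intro divide_right_mono add_right_mono mult_right_mono)
        (auto simp: power2_eq_square)
    also have "\<dots> = ?C * inverse (real t ^ 2)"
      using that by (simp add: field_simps power2_eq_square power4_eq_xxxx)
    finally show ?thesis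
      by (simp add: integral_nonneg_AE zero_le_even_power)
  qed
  then show "summable (\<lambda>t. expectation (\<lambda>w. ((\<Sum>s<t. Y s w) / real t) ^ 4))"
    by (intro summable_comparison_test[OF _ summable_mult[OF inverse_power_summable]]) auto
qed (simp add: integrable_partial_sum_power)

end

end

section \<open>Selection of the best child and the step-size recursion\<close>

definition argmin_index :: "nat \<Rightarrow> (nat \<Rightarrow> real) \<Rightarrow> nat" where
  "argmin_index lam v = (LEAST i. i < lam \<and> (\<forall>l<lam. v i \<le> v l))"

lemma argmin_index:
  assumes "lam \<ge> 1"
  shows argmin_index_less: "argmin_index lam v < lam"
    and argmin_index_le: "\<And>l. l < lam \<Longrightarrow> v (argmin_index lam v) \<le> v l"
proof -
  have "0 \<in> {..<lam}" using assms by simp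
  then have finite: "finite (v ` {..<lam})" "v ` {..<lam} \<noteq> {}" by auto
  obtain i where "i < lam" "v i = Min (v ` {..<lam})" using Min_in[OF finite] by auto
  then have "\<exists>i. i < lam \<and> (\<forall>l<lam. v i \<le> v l)"
    using finite by (metis Min_le image_eqI lessThan_iff)
  from LeastI_ex[OF this]
  show "argmin_index lam v < lam" "\<And>l. l < lam \<Longrightarrow> v (argmin_index lam v) \<le> v l"
    unfolding argmin_index_def by auto
qed

lemma argmin_index_eq_Min:
  assumes "lam \<ge> 1"
  shows "v (argmin_index lam v) = Min (v ` {..<lam})"
proof -
  have "0 \<in> {..<lam}" using assms by simp
  then have "finite (v ` {..<lam})" "v ` {..<lam} \<noteq> {}" by auto
  then show ?thesis
    by (intro antisym) (use argmin_index[OF assms] in \<open>auto intro!: Min.boundedI Min_le\<close>)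
qed

lemma argmin_index_eq_iff:
  assumes "lam \<ge> 1"
  shows "argmin_index lam v = i \<longleftrightarrow> i < lam \<and> (\<forall>l<lam. v i \<le> v l) \<and> (\<forall>l<i. v i < v l)"
proof
  assume i: "argmin_index lam v = i"
  have "v i < v l" if "l < i" for l
  proof -
    have "\<not> (l < lam \<and> (\<forall>m<lam. v l \<le> v m))"
      using not_less_Least[of l "\<lambda>i. i < lam \<and> (\<forall>l<lam. v i \<le> v l)"] i that
      unfolding argmin_index_def by auto
    moreover have "l < lam" using that i argmin_index_less[OF assms, of v] by linarith
    ultimately obtain m where "m < lam" "v m < v l" by (auto simp: not_le)
    then show ?thesis using argmin_index_le[OF assms, where l=m and v=v] i by auto
  qed
  then show "i < lam \<and> (\<forall>l<lam. v i \<le> v l) \<and> (\<forall>l<i. v i < v l)"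
    using argmin_index[OF assms, where v=v] i by auto
next
  assume i: "i < lam \<and> (\<forall>l<lam. v i \<le> v l) \<and> (\<forall>l<i. v i < v l)"
  show "argmin_index lam v = i"
    unfolding argmin_index_def
  proof (rule Least_equality)
    fix j assume "j < lam \<and> (\<forall>l<lam. v j \<le> v l)"
    then show "i \<le> j" using i by (meson leD not_le_imp_less)
  qed (use i in auto)
qed

lemma argmin_index_cong:
  assumes "\<And>i. i < lam \<Longrightarrow> v i = v' i"
  shows "argmin_index lam v = argmin_index lam v'"
  unfolding argmin_index_def
  by (rule arg_cong[where f=Least]) (use assms in \<open>auto simp: fun_eq_iff\<close>)

lemma measurable_argmin_index:
  fixes v :: "'b \<Rightarrow> nat \<Rightarrow> real"
  assumes "lam \<ge> 1" and v: "\<And>i. i < lam \<Longrightarrow> (\<lambda>u. v u i) \<in> borel_measurable N"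
  shows "(\<lambda>u. argmin_index lam (v u)) \<in> measurable N (count_space {..<lam})"
  unfolding measurable_count_space_eq2_countable
proof (intro conjI ballI Pi_I)
  fix u show "argmin_index lam (v u) \<in> {..<lam}" using argmin_index_less[OF assms(1)] by auto
next
  fix a assume a: "a \<in> {..<lam}"
  have "(\<lambda>u. argmin_index lam (v u)) -` {a} \<inter> space N =
      {u \<in> space N. (\<forall>l\<in>{..<lam}. v u a \<le> v u l) \<and> (\<forall>l\<in>{..<a}. v u a < v u l)}"
    using a argmin_index_eq_iff[OF assms(1)] by auto
  also have "\<dots> \<in> sets N"
  proof -
    have "\<And>l. l \<in> {..<lam} \<Longrightarrow> {u \<in> space N. v u a \<le> v u l} \<in> sets N"
      "\<And>l. l \<in> {..<a} \<Longrightarrow> {u \<in> space N. v u a < v u l} \<in> sets N"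
      using a v by (auto intro: measurable)
    then show ?thesis by (intro sets.sets_Collect_conj sets.sets_Collect_finite_All) auto
  qed
  finally show "(\<lambda>u. argmin_index lam (v u)) -` {a} \<inter> space N \<in> sets N" .
qed

text \<open>For \<open>c = 1\<close>, \<open>ln \<sigma>\<^sub>t\<^sub>+\<^sub>1 - ln \<sigma>\<^sub>t\<close> as a function of the noise \<open>z i j = [\<xi>\<^sub>t\<^sub>,\<^sub>i]\<^sub>j\<close> of one
iteration.\<close>

definition csa_log_increment :: "nat \<Rightarrow> nat \<Rightarrow> real \<Rightarrow> (nat \<Rightarrow> nat \<Rightarrow> real) \<Rightarrow> real" where
  "csa_log_increment n lam d z =
     1 / (2 * d) * ((\<Sum>j<n. (z (argmin_index lam (\<lambda>i. z i 0)) j)\<^sup>2) / real n - 1)"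

lemma csa_log_increment_cong:
  assumes "lam \<ge> 1" "n \<ge> 1" "\<And>i j. i < lam \<Longrightarrow> j < n \<Longrightarrow> z i j = z' i j"
  shows "csa_log_increment n lam d z = csa_log_increment n lam d z'"
proof -
  have selection: "argmin_index lam (\<lambda>i. z i 0) = argmin_index lam (\<lambda>i. z' i 0)"
    using assms by (intro argmin_index_cong) auto
  have "argmin_index lam (\<lambda>i. z i 0) < lam" using argmin_index_less[OF assms(1)] by blast
  then show ?thesis
    unfolding csa_log_increment_def selection using assms(3) selection by (auto intro!: sum.cong)
qed

lemma measurable_csa_log_increment:
  fixes z :: "'b \<Rightarrow> nat \<Rightarrow> nat \<Rightarrow> real"
  assumes "lam \<ge> 1" "n \<ge> 1"
    and z: "\<And>i j. i < lam \<Longrightarrow> j < n \<Longrightarrow> (\<lambda>u. z u i j) \<in> borel_measurable N"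
  shows "(\<lambda>u. csa_log_increment n lam d (z u)) \<in> borel_measurable N"
proof -
  have selection: "(\<lambda>u. argmin_index lam (\<lambda>i. z u i 0)) \<in> measurable N (count_space {..<lam})"
    using assms by (intro measurable_argmin_index) auto
  show ?thesis
    unfolding csa_log_increment_def
    by (rule measurable_compose_countable'[OF _ selection, where f="\<lambda>i u. 1 / (2 * d) * ((\<Sum>j<n. (z u i j)\<^sup>2) / real n - 1)"])
       (use z in auto)
qed

lemma csa_es_sigma_Suc:
  assumes "s0 > 0" "lam \<ge> 1"
  shows "fst (snd (csa_es n lam 1 d (\<lambda>x. x 0) X0 s0 p xi t)) > 0 \<and>
         fst (snd (csa_es n lam 1 d (\<lambda>x. x 0) X0 s0 p xi (Suc t))) =
         fst (snd (csa_es n lam 1 d (\<lambda>x. x 0) X0 s0 p xi t)) * exp (csa_log_increment n lam d (xi t))"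
proof (induction t)
  case 0
  have "\<And>s i l. s > 0 \<Longrightarrow> (X0 0 + s * xi 0 i 0 \<le> X0 0 + s * xi 0 l 0) = (xi 0 i 0 \<le> xi 0 l 0)"
    by simp
  then show ?case using assms
    by (simp add: Let_def csa_log_increment_def argmin_index_def)
next
  case (Suc t)
  obtain X s q where state: "csa_es n lam 1 d (\<lambda>x. x 0) X0 s0 p xi (Suc t) = (X, s, q)"
    by (metis prod_cases3)
  have "s > 0" using Suc state by (auto simp: Let_def split: prod.splits)
  then have "\<And>i l. (X 0 + s * xi (Suc t) i 0 \<le> X 0 + s * xi (Suc t) l 0) = (xi (Suc t) i 0 \<le> xi (Suc t) l 0)"
    by simp
  with \<open>s > 0\<close> show ?case
    by (simp only: csa_es.simps(2)[of _ _ _ _ _ _ _ _ _ "Suc t"] state)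
      (simp add: Let_def csa_log_increment_def argmin_index_def)
qed

lemma csa_sigma_0: "csa_sigma n lam c d f X0 s0 p0 xi 0 w = s0"
  by (simp add: csa_sigma_def)

context
  fixes n lam :: nat and d s0 :: real and X0 :: "nat \<Rightarrow> real"
    and p0 :: "nat \<Rightarrow> 'a \<Rightarrow> real" and xi :: "nat \<Rightarrow> nat \<Rightarrow> nat \<Rightarrow> 'a \<Rightarrow> real"
  assumes s0: "s0 > 0" and offspring: "lam \<ge> 1"
begin

lemma csa_sigma_pos: "csa_sigma n lam 1 d (\<lambda>x. x 0) X0 s0 p0 xi t w > 0"
  using csa_es_sigma_Suc[OF s0 offspring] unfolding csa_sigma_def by blast

lemma ln_csa_sigma_Suc:
  "ln (csa_sigma n lam 1 d (\<lambda>x. x 0) X0 s0 p0 xi (Suc t) w) =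
   ln (csa_sigma n lam 1 d (\<lambda>x. x 0) X0 s0 p0 xi t w) + csa_log_increment n lam d (\<lambda>i j. xi t i j w)"
  using csa_es_sigma_Suc[OF s0 offspring, of n d X0 "\<lambda>j. p0 j w" "\<lambda>t i j. xi t i j w" t]
  unfolding csa_sigma_def by (simp add: ln_mult)

lemma ln_csa_sigma_div:
  "ln (csa_sigma n lam 1 d (\<lambda>x. x 0) X0 s0 p0 xi t' w / csa_sigma n lam 1 d (\<lambda>x. x 0) X0 s0 p0 xi t w) =
   ln (csa_sigma n lam 1 d (\<lambda>x. x 0) X0 s0 p0 xi t' w) - ln (csa_sigma n lam 1 d (\<lambda>x. x 0) X0 s0 p0 xi t w)"
  using csa_sigma_pos[of t' w] csa_sigma_pos[of t w] by (simp add: ln_div)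

lemma ln_csa_sigma_div_s0:
  "ln (csa_sigma n lam 1 d (\<lambda>x. x 0) X0 s0 p0 xi t w / s0) =
   (\<Sum>s<t. csa_log_increment n lam d (\<lambda>i j. xi s i j w))"
proof -
  have "ln (csa_sigma n lam 1 d (\<lambda>x. x 0) X0 s0 p0 xi t w / s0) =
      ln (csa_sigma n lam 1 d (\<lambda>x. x 0) X0 s0 p0 xi t w) - ln s0"
    using csa_sigma_pos[of t w] s0 by (simp add: ln_div)
  also have "\<dots> = (\<Sum>s<t. csa_log_increment n lam d (\<lambda>i j. xi s i j w))"
    by (induction t) (simp_all add: csa_sigma_0 ln_csa_sigma_Suc)
  finally show ?thesis .
qed

end

section \<open>The second moment of the minimum of standard normal variables\<close>

definition std_normal_tail :: "real \<Rightarrow> real" where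
  "std_normal_tail x = measure std_normal_measure {x..}"

text \<open>With \<open>q = std_normal_tail x\<close>, this is \<open>P(|\<N>\<^sub>1\<^sub>:\<^sub>\<lambda>| \<ge> x) - P(|\<N>| \<ge> x)\<close> for \<open>x > 0\<close>.\<close>

definition min_tail_excess :: "nat \<Rightarrow> real \<Rightarrow> real" where
  "min_tail_excess lam q = q ^ lam + 1 - (1 - q) ^ lam - 2 * q"

lemma min_tail_excess_eq_0: "lam = 1 \<or> lam = 2 \<Longrightarrow> min_tail_excess lam q = 0"
  by (auto simp: min_tail_excess_def power2_eq_square algebra_simps)

lemma min_tail_excess_pos:
  assumes q: "0 < q" "q < 1/2" and "3 \<le> lam"
  shows "0 < min_tail_excess lam q"
  using \<open>3 \<le> lam\<close>
proof (induction lam rule: nat_induct_at_least)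
  case base
  have "min_tail_excess 3 q = q * (1 - q) * (1 - 2 * q)"
    by (simp add: min_tail_excess_def power3_eq_cube algebra_simps)
  then show ?case using q by simp
next
  case (Suc k)
  then obtain j where k: "k = Suc j" by (cases k) auto
  have "q ^ j \<le> (1 - q) ^ j" using q by (intro power_mono) auto
  then have "q * (1 - q) * q ^ j \<le> q * (1 - q) * (1 - q) ^ j"
    using q by (intro mult_left_mono) auto
  then have "min_tail_excess k q \<le> min_tail_excess (Suc k) q"
    by (simp add: min_tail_excess_def k algebra_simps)
  then show ?case using Suc by linarith
qed

lemma borel_measurable_antimono:
  fixes h :: "real \<Rightarrow> real"
  assumes "\<And>x y. x \<le> y \<Longrightarrow> h y \<le> h x"
  shows "h \<in> borel_measurable borel"
proof -
  have "(\<lambda>x. - h x) \<in> borel_measurable borel"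
    by (rule borel_measurable_mono) (auto simp: mono_def assms)
  then show ?thesis by (metis borel_measurable_uminus_eq)
qed

lemma borel_measurable_std_normal_tail[measurable]: "std_normal_tail \<in> borel_measurable borel"
proof (rule borel_measurable_antimono)
  interpret prob_space std_normal_measure by (rule prob_space_std_normal_measure)
  fix x y :: real assume "x \<le> y"
  then show "std_normal_tail y \<le> std_normal_tail x"
    unfolding std_normal_tail_def
    by (intro finite_measure_mono) (auto simp: std_normal_measure_def)
qed

context prob_space begin

lemma nn_integral_square_layer_cake:
  fixes Z :: "'a \<Rightarrow> real"
  assumes [measurable]: "Z \<in> borel_measurable M"
  shows "(\<integral>\<^sup>+w. ennreal ((Z w)\<^sup>2) \<partial>M) =
    (\<integral>\<^sup>+x. ennreal (2 * x) * indicator {0..} x * emeasure M {w \<in> space M. x \<le> \<bar>Z w\<bar>} \<partial>lborel)"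
proof -
  interpret pair_sigma_finite M lborel
    by (intro pair_sigma_finite.intro sigma_finite_measure_axioms lborel.sigma_finite_measure_axioms)
  define g where "g w x = (if 0 \<le> x \<and> x \<le> \<bar>Z w\<bar> then ennreal (2 * x) else 0)" for w x
  have "(\<integral>\<^sup>+x. g w x \<partial>lborel) = ennreal ((Z w)\<^sup>2)" for w
  proof -
    have "(\<integral>\<^sup>+x. g w x \<partial>lborel) = (\<integral>\<^sup>+x. ennreal (2 * x) * indicator {0..\<bar>Z w\<bar>} x \<partial>lborel)"
      by (intro nn_integral_cong) (auto simp: g_def indicator_def)
    also have "\<dots> = ennreal (\<bar>Z w\<bar>\<^sup>2 - 0\<^sup>2)"
      by (rule nn_integral_FTC_Icc[where F="\<lambda>x. x\<^sup>2"]) (auto intro!: derivative_eq_intros)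
    finally show ?thesis by simp
  qed
  then have "(\<integral>\<^sup>+w. ennreal ((Z w)\<^sup>2) \<partial>M) = (\<integral>\<^sup>+w. (\<integral>\<^sup>+x. g w x \<partial>lborel) \<partial>M)"
    by simp
  also have "\<dots> = (\<integral>\<^sup>+x. (\<integral>\<^sup>+w. g w x \<partial>M) \<partial>lborel)"
    by (rule Fubini'[symmetric]) (simp add: g_def[abs_def])
  also have "\<dots> = (\<integral>\<^sup>+x. ennreal (2 * x) * indicator {0..} x * emeasure M {w \<in> space M. x \<le> \<bar>Z w\<bar>} \<partial>lborel)"
  proof (intro nn_integral_cong)
    fix x
    show "(\<integral>\<^sup>+w. g w x \<partial>M) =
      ennreal (2 * x) * indicator {0..} x * emeasure M {w \<in> space M. x \<le> \<bar>Z w\<bar>}"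
    proof (cases "0 \<le> x")
    case True
    then have "(\<integral>\<^sup>+w. g w x \<partial>M) = (\<integral>\<^sup>+w. ennreal (2 * x) * indicator {w \<in> space M. x \<le> \<bar>Z w\<bar>} w \<partial>M)"
      by (intro nn_integral_cong) (auto simp: g_def indicator_def)
    also have "\<dots> = ennreal (2 * x) * emeasure M {w \<in> space M. x \<le> \<bar>Z w\<bar>}"
      by (rule nn_integral_cmult_indicator) measurable
      finally show ?thesis using True by simp
    qed (simp add: g_def)
  qed
  finally show ?thesis .
qed

lemma prob_abs_ge:
  fixes Z :: "'a \<Rightarrow> real"
  assumes "0 < x" "Z \<in> borel_measurable M"
  shows "prob {w \<in> space M. x \<le> \<bar>Z w\<bar>} = prob {w \<in> space M. x \<le> Z w} + prob {w \<in> space M. Z w \<le> - x}"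
proof -
  have "{w \<in> space M. x \<le> \<bar>Z w\<bar>} = {w \<in> space M. x \<le> Z w} \<union> {w \<in> space M. Z w \<le> - x}"
    using assms(1) by auto
  moreover have "{w \<in> space M. x \<le> Z w} \<inter> {w \<in> space M. Z w \<le> - x} = {}" using assms by auto
  moreover have "{w \<in> space M. x \<le> Z w} \<in> events" "{w \<in> space M. Z w \<le> - x} \<in> events"
    using assms(2) by measurable
  ultimately show ?thesis by (simp add: finite_measure_Union)
qed

end

locale std_normal_sample = prob_space +
  fixes a :: "nat \<Rightarrow> 'a \<Rightarrow> real" and lam :: nat
  assumes sample_size: "lam \<ge> 1"
    and indep_sample: "indep_vars (\<lambda>_. borel) a {..<lam}"
    and std_normal_sample: "\<And>i. i < lam \<Longrightarrow> distributed M lborel (a i) (\<lambda>x. ennreal (std_normal_density x))"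
begin

definition sample_min :: "'a \<Rightarrow> real" where
  "sample_min w = Min ((\<lambda>i. a i w) ` {..<lam})"

lemma sample_nonempty: "{..<lam} \<noteq> {}"
  using sample_size by (auto simp: lessThan_empty_iff)

lemma measurable_sample[measurable]: "i < lam \<Longrightarrow> a i \<in> borel_measurable M"
  using std_normal_sample by (simp add: distributed_def)

lemma measurable_sample_min[measurable]: "sample_min \<in> borel_measurable M"
  unfolding sample_min_def[abs_def] by (intro borel_measurable_Min) auto

lemma integrable_sample_square: "i < lam \<Longrightarrow> integrable M (\<lambda>w. (a i w)\<^sup>2)"
  using integrable_std_normal_power[OF std_normal_sample] by simp

lemma integrable_sample_min_square: "integrable M (\<lambda>w. (sample_min w)\<^sup>2)"
proof (rule Bochner_Integration.integrable_bound)
  show "integrable M (\<lambda>w. \<Sum>i<lam. (a i w)\<^sup>2)"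
    by (intro Bochner_Integration.integrable_sum integrable_sample_square) auto
  show "AE w in M. norm ((sample_min w)\<^sup>2) \<le> norm (\<Sum>i<lam. (a i w)\<^sup>2)"
  proof (intro always_eventually allI)
    fix w
    have "sample_min w \<in> (\<lambda>i. a i w) ` {..<lam}"
      unfolding sample_min_def using sample_nonempty by (intro Min_in) auto
    then have "(sample_min w)\<^sup>2 \<le> (\<Sum>i<lam. (a i w)\<^sup>2)" by (auto intro!: member_le_sum)
    then show "norm ((sample_min w)\<^sup>2) \<le> norm (\<Sum>i<lam. (a i w)\<^sup>2)" by (simp add: sum_nonneg)
  qed
qed simp

lemma prob_sample_ge: "i < lam \<Longrightarrow> prob {w \<in> space M. x \<le> a i w} = std_normal_tail x"
proof -
  assume i: "i < lam"
  then have "prob {w \<in> space M. x \<le> a i w} = measure (distr M borel (a i)) {x..}"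
    by (subst measure_distr) (auto simp: vimage_def Int_def conj_commute)
  then show ?thesis
    using distr_eq_std_normal_measure[OF std_normal_sample[OF i]] by (simp add: std_normal_tail_def)
qed

lemma prob_sample_le_neg: "i < lam \<Longrightarrow> prob {w \<in> space M. a i w \<le> - x} = std_normal_tail x"
proof -
  assume i: "i < lam"
  have "distributed M lborel (\<lambda>w. 0 + (-1) * a i w)
      (\<lambda>y. ennreal (normal_density (0 + (-1) * 0) (\<bar>-1\<bar> * 1) y))"
    by (rule normal_density_affine[OF std_normal_sample[OF i]]) auto
  then have "distr M borel (\<lambda>w. - a i w) = std_normal_measure"
    by (intro distr_eq_std_normal_measure) simp
  moreover have "{w \<in> space M. a i w \<le> - x} = {w \<in> space M. x \<le> - a i w}" by auto
  moreover have "prob {w \<in> space M. x \<le> - a i w} = measure (distr M borel (\<lambda>w. - a i w)) {x..}"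
    using i by (subst measure_distr) (auto simp: vimage_def Int_def conj_commute)
  ultimately show ?thesis by (simp add: std_normal_tail_def)
qed

lemma prob_sample_gt_neg: "i < lam \<Longrightarrow> prob {w \<in> space M. - x < a i w} = 1 - std_normal_tail x"
proof -
  assume i: "i < lam"
  have "{w \<in> space M. - x < a i w} = space M - {w \<in> space M. a i w \<le> - x}" by auto
  moreover have "{w \<in> space M. a i w \<le> - x} \<in> events" using i by measurable
  ultimately show ?thesis using prob_compl prob_sample_le_neg[OF i] by simp
qed

lemma prob_sample_min_ge: "prob {w \<in> space M. x \<le> sample_min w} = std_normal_tail x ^ lam"
proof -
  have "{w \<in> space M. x \<le> sample_min w} = (\<Inter>i\<in>{..<lam}. a i -` {x..} \<inter> space M)"
    using sample_nonempty by (auto simp: sample_min_def Min_ge_iff)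
  then have "prob {w \<in> space M. x \<le> sample_min w} = (\<Prod>i\<in>{..<lam}. prob (a i -` {x..} \<inter> space M))"
    using indep_varsD_finite[OF indep_sample sample_nonempty] by simp
  also have "\<dots> = (\<Prod>i\<in>{..<lam}. std_normal_tail x)"
    using prob_sample_ge by (intro prod.cong) (auto simp: vimage_def Int_def conj_commute)
  finally show ?thesis by simp
qed

lemma prob_sample_min_le_neg:
  "prob {w \<in> space M. sample_min w \<le> - x} = 1 - (1 - std_normal_tail x) ^ lam"
proof -
  have "{w \<in> space M. - x < sample_min w} = (\<Inter>i\<in>{..<lam}. a i -` {- x<..} \<inter> space M)"
    using sample_nonempty by (auto simp: sample_min_def Min_gr_iff)
  then have "prob {w \<in> space M. - x < sample_min w} = (\<Prod>i\<in>{..<lam}. prob (a i -` {- x<..} \<inter> space M))"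
    using indep_varsD_finite[OF indep_sample sample_nonempty] by simp
  also have "\<dots> = (\<Prod>i\<in>{..<lam}. 1 - std_normal_tail x)"
    using prob_sample_gt_neg by (intro prod.cong) (auto simp: vimage_def Int_def conj_commute)
  finally have "prob {w \<in> space M. - x < sample_min w} = (1 - std_normal_tail x) ^ lam" by simp
  moreover have "{w \<in> space M. sample_min w \<le> - x} = space M - {w \<in> space M. - x < sample_min w}"
    by auto
  moreover have "{w \<in> space M. - x < sample_min w} \<in> events" by measurable
  ultimately show ?thesis using prob_compl by simp
qed

lemma std_normal_tail_pos: "0 < x \<Longrightarrow> 0 < std_normal_tail x"
proof -
  interpret N: prob_space std_normal_measure by (rule prob_space_std_normal_measure)
  have "0 < emeasure std_normal_measure {x..x+1}"
    by (rule emeasure_std_normal_measure_pos) auto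
  also have "\<dots> \<le> emeasure std_normal_measure {x..}"
    by (rule emeasure_mono) (auto simp: std_normal_measure_def)
  finally show ?thesis by (simp add: std_normal_tail_def N.emeasure_eq_measure)
qed

lemma std_normal_tail_less_half:
  assumes "0 < x" shows "std_normal_tail x < 1/2"
proof -
  interpret N: prob_space std_normal_measure by (rule prob_space_std_normal_measure)
  have a0: "0 < lam" using sample_size by simp
  let ?mid = "{w \<in> space M. - x < a 0 w \<and> a 0 w < x}"
  have "{w \<in> space M. - x < a 0 w} = ?mid \<union> {w \<in> space M. x \<le> a 0 w}" using assms by auto
  moreover have "?mid \<inter> {w \<in> space M. x \<le> a 0 w} = {}" by auto
  moreover have "?mid \<in> events" "{w \<in> space M. x \<le> a 0 w} \<in> events" using a0 by measurable
  ultimately have "prob {w \<in> space M. - x < a 0 w} = prob ?mid + prob {w \<in> space M. x \<le> a 0 w}"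
    by (simp add: finite_measure_Union)
  then have "prob ?mid = 1 - 2 * std_normal_tail x"
    using prob_sample_gt_neg[OF a0] prob_sample_ge[OF a0] by simp
  moreover have "prob ?mid = measure (distr M borel (a 0)) {- x<..<x}"
    using a0 by (subst measure_distr) (auto simp: vimage_def Int_def conj_commute)
  moreover have "distr M borel (a 0) = std_normal_measure"
    using distr_eq_std_normal_measure[OF std_normal_sample[OF a0]] .
  moreover have "0 < emeasure std_normal_measure {- x<..<x}"
    using assms by (intro emeasure_std_normal_measure_pos) auto
  ultimately show ?thesis by (simp add: N.emeasure_eq_measure)
qed

lemma prob_abs_sample_min_ge:
  "0 < x \<Longrightarrow> prob {w \<in> space M. x \<le> \<bar>sample_min w\<bar>} =
     prob {w \<in> space M. x \<le> \<bar>a 0 w\<bar>} + min_tail_excess lam (std_normal_tail x)"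
  using prob_abs_ge[of x sample_min] prob_abs_ge[of x "a 0"] sample_size
    prob_sample_min_ge prob_sample_min_le_neg prob_sample_ge[of 0] prob_sample_le_neg[of 0]
  by (simp add: min_tail_excess_def)

lemma min_tail_excess_std_normal_tail_nonneg:
  assumes "0 < x" shows "0 \<le> min_tail_excess lam (std_normal_tail x)"
proof (cases "lam \<ge> 3")
  case False
  then have "lam = 1 \<or> lam = 2" using sample_size by auto
  then show ?thesis by (simp add: min_tail_excess_eq_0)
qed (use min_tail_excess_pos std_normal_tail_pos[OF assms] std_normal_tail_less_half[OF assms]
  in \<open>auto intro: less_imp_le\<close>)

lemma layer_cake_integrand_sample_min:
  "ennreal (2 * x) * indicator {0..} x * emeasure M {w \<in> space M. x \<le> \<bar>sample_min w\<bar>} =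
   ennreal (2 * x) * indicator {0..} x * emeasure M {w \<in> space M. x \<le> \<bar>a 0 w\<bar>} +
   ennreal (2 * x * min_tail_excess lam (std_normal_tail x)) * indicator {0<..} x"
proof (cases "0 < x")
  case True
  let ?p = "prob {w \<in> space M. x \<le> \<bar>a 0 w\<bar>}" and ?e = "min_tail_excess lam (std_normal_tail x)"
  have "ennreal (2 * x) * indicator {0..} x * emeasure M {w \<in> space M. x \<le> \<bar>sample_min w\<bar>}
      = ennreal (2 * x * ?p + 2 * x * ?e)"
    using True by (simp add: emeasure_eq_measure prob_abs_sample_min_ge ennreal_mult'[symmetric] algebra_simps)
  also have "\<dots> = ennreal (2 * x * ?p) + ennreal (2 * x * ?e)"
    using True min_tail_excess_std_normal_tail_nonneg[OF True] by (intro ennreal_plus) auto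
  finally show ?thesis
    using True by (simp add: emeasure_eq_measure ennreal_mult'[symmetric])
next
  case False
  then have "ennreal (2 * x) = 0" by (simp add: ennreal_eq_0_iff)
  then show ?thesis using False by simp
qed

text \<open>The layer-cake formula for \<open>sample_min\<close> and for \<open>a 0\<close>, subtracted.\<close>

lemma expectation_sample_min_square_eq:
  "ennreal (expectation (\<lambda>w. (sample_min w)\<^sup>2)) =
   1 + (\<integral>\<^sup>+x. ennreal (2 * x * min_tail_excess lam (std_normal_tail x)) * indicator {0<..} x \<partial>lborel)"
proof -
  have a0: "0 < lam" using sample_size by simp
  define G where "G x = ennreal (2 * x) * indicator {0..} x * emeasure M {w \<in> space M. x \<le> \<bar>a 0 w\<bar>}" for x
  define U where "U x = ennreal (2 * x * min_tail_excess lam (std_normal_tail x)) * indicator {0<..} x" for x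
  have "(\<lambda>x. prob {w \<in> space M. x \<le> \<bar>a 0 w\<bar>}) \<in> borel_measurable borel"
    using a0 by (intro borel_measurable_antimono finite_measure_mono) auto
  then have G: "G \<in> borel_measurable borel" by (simp add: G_def[abs_def] emeasure_eq_measure)
  have U: "U \<in> borel_measurable borel" unfolding U_def[abs_def] min_tail_excess_def by measurable
  have "ennreal (expectation (\<lambda>w. (sample_min w)\<^sup>2)) = (\<integral>\<^sup>+w. ennreal ((sample_min w)\<^sup>2) \<partial>M)"
    by (rule nn_integral_eq_integral[symmetric, OF integrable_sample_min_square]) auto
  also have "\<dots> = (\<integral>\<^sup>+x. G x + U x \<partial>lborel)"
    by (simp add: nn_integral_square_layer_cake layer_cake_integrand_sample_min G_def U_def)
  also have "\<dots> = (\<integral>\<^sup>+x. G x \<partial>lborel) + (\<integral>\<^sup>+x. U x \<partial>lborel)"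
    by (rule nn_integral_add) (use G U in auto)
  also have "(\<integral>\<^sup>+x. G x \<partial>lborel) = (\<integral>\<^sup>+w. ennreal ((a 0 w)\<^sup>2) \<partial>M)"
    using a0 by (simp add: nn_integral_square_layer_cake G_def)
  also have "\<dots> = ennreal (expectation (\<lambda>w. (a 0 w)\<^sup>2))"
    by (rule nn_integral_eq_integral[OF integrable_sample_square[OF a0]]) auto
  also have "expectation (\<lambda>w. (a 0 w)\<^sup>2) = 1"
    using expectation_std_normal_square[OF std_normal_sample[OF a0]] .
  finally show ?thesis by (simp add: U_def)
qed

lemma expectation_sample_min_square_eq_1:
  assumes "lam \<le> 2" shows "expectation (\<lambda>w. (sample_min w)\<^sup>2) = 1"
proof -
  have "lam = 1 \<or> lam = 2" using assms sample_size by auto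
  then have "ennreal (expectation (\<lambda>w. (sample_min w)\<^sup>2)) = ennreal 1"
    using expectation_sample_min_square_eq by (simp add: min_tail_excess_eq_0)
  then show ?thesis by (subst (asm) ennreal_inj) (auto simp: integral_nonneg_AE)
qed

lemma expectation_sample_min_square_gt_1:
  assumes "lam \<ge> 3" shows "expectation (\<lambda>w. (sample_min w)\<^sup>2) > 1"
proof -
  let ?U = "\<lambda>x. ennreal (2 * x * min_tail_excess lam (std_normal_tail x)) * indicator {0<..} x"
  have "(\<integral>\<^sup>+x. ?U x \<partial>lborel) \<noteq> 0"
  proof
    assume "(\<integral>\<^sup>+x. ?U x \<partial>lborel) = 0"
    then have "AE x in lborel. ?U x = 0"
      by (subst (asm) nn_integral_0_iff_AE) (auto simp: min_tail_excess_def)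
    moreover have "0 < ?U x" if "0 < x" for x
      using min_tail_excess_pos[OF std_normal_tail_pos[OF that] std_normal_tail_less_half[OF that] assms]
        that by simp
    ultimately have "AE x in lborel. (x::real) \<notin> {0<..<1}"
      by (elim eventually_mono) fastforce
    then have "emeasure lborel {0<..<(1::real)} = 0"
      by (subst (asm) AE_iff_measurable[of "{0<..<1}"]) auto
    then show False by simp
  qed
  then have "ennreal 1 < ennreal (expectation (\<lambda>w. (sample_min w)\<^sup>2))"
    unfolding expectation_sample_min_square_eq
    by (simp add: zero_less_iff_neq_zero[symmetric] ennreal_add_left_cancel_less[of 1 0, simplified])
  then show ?thesis by (simp add: ennreal_less_iff)
qed

end

section \<open>The increments of \<open>ln \<sigma>\<^sub>t\<close>\<close>

locale csa_noise = prob_space M for M :: "'a measure" +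
  fixes n lam :: nat and d :: real and p0 :: "nat \<Rightarrow> 'a \<Rightarrow> real"
    and xi :: "nat \<Rightarrow> nat \<Rightarrow> nat \<Rightarrow> 'a \<Rightarrow> real"
  assumes dimension: "n \<ge> 1" and offspring: "lam \<ge> 1" and damping: "d > 0"
    and indep_noise: "indep_vars (\<lambda>_. borel) (noise_family p0 xi) (noise_index n lam)"
    and std_normal_noise: "\<And>k. k \<in> noise_index n lam \<Longrightarrow>
        distributed M lborel (noise_family p0 xi k) (\<lambda>x. ennreal (std_normal_density x))"
begin

lemma distributed_xi:
  "i < lam \<Longrightarrow> j < n \<Longrightarrow> distributed M lborel (xi t i j) (\<lambda>x. ennreal (std_normal_density x))"
  using std_normal_noise[of "Inr (t, i, j)"] by (simp add: noise_family_def noise_index_def)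

lemma measurable_xi: "i < lam \<Longrightarrow> j < n \<Longrightarrow> xi t i j \<in> borel_measurable M"
  using distributed_xi by (simp add: distributed_def)

definition log_increment :: "nat \<Rightarrow> 'a \<Rightarrow> real" where
  "log_increment t w = csa_log_increment n lam d (\<lambda>i j. xi t i j w)"

lemma measurable_log_increment[measurable]: "log_increment t \<in> borel_measurable M"
  unfolding log_increment_def[abs_def]
  by (rule measurable_csa_log_increment[OF offspring dimension]) (simp add: measurable_xi)

lemma indep_vars_log_increment: "indep_vars (\<lambda>_. borel) log_increment UNIV"
proof -
  define iteration :: "nat \<Rightarrow> (nat + nat \<times> nat \<times> nat) set"
    where "iteration t = Inr ` {(t', i, j). t' = t \<and> i < lam \<and> j < n}" for t
  define F where "F t u = csa_log_increment n lam d (\<lambda>i j. if i < lam \<and> j < n then u (Inr (t, i, j)) else 0)"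
    for t and u :: "nat + nat \<times> nat \<times> nat \<Rightarrow> real"
  have "indep_vars (\<lambda>t. PiM (iteration t) (\<lambda>_. borel))
      (\<lambda>t w. restrict (\<lambda>k. noise_family p0 xi k w) (iteration t)) UNIV"
    by (rule indep_vars_restrict[OF indep_noise])
      (auto simp: iteration_def noise_index_def disjoint_family_on_def)
  moreover have "F t \<in> borel_measurable (PiM (iteration t) (\<lambda>_. borel))" for t
    unfolding F_def[abs_def]
    by (rule measurable_csa_log_increment[OF offspring dimension]) (auto simp: iteration_def)
  ultimately have "indep_vars (\<lambda>_. borel)
      (\<lambda>t w. F t (restrict (\<lambda>k. noise_family p0 xi k w) (iteration t))) UNIV"
    by (rule indep_vars_compose2)
  moreover have "F t (restrict (\<lambda>k. noise_family p0 xi k w) (iteration t)) = log_increment t w" for t w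
    unfolding F_def log_increment_def
    by (rule csa_log_increment_cong[OF offspring dimension]) (auto simp: iteration_def noise_family_def)
  ultimately show ?thesis by simp
qed

lemma std_normal_sample_first_coordinates: "std_normal_sample M (\<lambda>i. xi t i 0) lam"
proof
  let ?\<phi> = "\<lambda>i::nat. (Inr (t, i, 0) :: nat + nat \<times> nat \<times> nat)"
  have "inj_on ?\<phi> {..<lam}" "?\<phi> ` {..<lam} \<subseteq> noise_index n lam"
    using dimension by (auto simp: inj_on_def noise_index_def)
  from indep_vars_reindex[OF indep_noise this]
  show "indep_vars (\<lambda>_. borel) (\<lambda>i. xi t i 0) {..<lam}" by (simp add: noise_family_def)
qed (use offspring dimension distributed_xi in auto)

lemma expectation_Min_first_coordinates_square:
  "expectation (\<lambda>w. (Min ((\<lambda>i. xi t i 0 w) ` {..<lam}))\<^sup>2) = E_min_normal_sq lam"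
proof -
  interpret std_normal_sample M "\<lambda>i. xi t i 0" lam by (rule std_normal_sample_first_coordinates)
  have vector: "(\<lambda>w. \<lambda>i\<in>{..<lam}. xi t i 0 w) \<in> measurable M (PiM {..<lam} (\<lambda>_. borel))"
    by (intro measurable_restrict) simp
  have law: "std_normal_prod lam = distr M (PiM {..<lam} (\<lambda>_. borel)) (\<lambda>w. \<lambda>i\<in>{..<lam}. xi t i 0 w)"
    unfolding std_normal_prod_def
    by (rule distr_restrict_std_normal_eq_PiM[symmetric, OF _ sample_nonempty indep_sample])
      (auto intro: std_normal_sample)
  have "(\<lambda>x. (Min ((\<lambda>i. x i) ` {..<lam}))\<^sup>2) \<in> borel_measurable (PiM {..<lam} (\<lambda>_. borel :: real measure))"
    by measurable
  from integral_distr[OF vector this]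
  have "E_min_normal_sq lam =
      (\<integral>w. (Min ((\<lambda>i. (\<lambda>i\<in>{..<lam}. xi t i 0 w) i) ` {..<lam}))\<^sup>2 \<partial>M)"
    unfolding E_min_normal_sq_def law .
  also have "\<dots> = expectation (\<lambda>w. (Min ((\<lambda>i. xi t i 0 w) ` {..<lam}))\<^sup>2)"
    by (intro Bochner_Integration.integral_cong arg_cong[where f="\<lambda>x. x\<^sup>2"] arg_cong[where f=Min]) auto
  finally show ?thesis by simp
qed

lemma E_min_normal_sq_eq_1:
  assumes "lam \<le> 2" shows "E_min_normal_sq lam = 1"
proof -
  interpret std_normal_sample M "\<lambda>i. xi 0 i 0" lam by (rule std_normal_sample_first_coordinates)
  show ?thesis
    using expectation_sample_min_square_eq_1[OF assms] expectation_Min_first_coordinates_square[of 0]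
    by (simp add: sample_min_def)
qed

lemma E_min_normal_sq_gt_1:
  assumes "lam \<ge> 3" shows "E_min_normal_sq lam > 1"
proof -
  interpret std_normal_sample M "\<lambda>i. xi 0 i 0" lam by (rule std_normal_sample_first_coordinates)
  show ?thesis
    using expectation_sample_min_square_gt_1[OF assms] expectation_Min_first_coordinates_square[of 0]
    by (simp add: sample_min_def)
qed

text \<open>The vector seen through child \<open>i\<close> of iteration \<open>t\<close>: the first coordinates of all \<open>\<lambda>\<close>
children, followed by the coordinates \<open>1, \<dots>, n - 1\<close> of child \<open>i\<close>.  The selected child is a
function of the first block, which is common to all \<open>i\<close>; hence (by \<open>distr_select_eq\<close>) the
vector seen through the selected child has the same i.i.d. standard normal law.\<close>

definition observation_coords :: "nat set" where
  "observation_coords = {..<lam + n - 1}"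

definition observation_noise :: "nat \<Rightarrow> nat \<Rightarrow> nat \<Rightarrow> nat + nat \<times> nat \<times> nat" where
  "observation_noise t i k = (if k < lam then Inr (t, k, 0) else Inr (t, i, k - lam + 1))"

definition observation :: "nat \<Rightarrow> nat \<Rightarrow> 'a \<Rightarrow> nat \<Rightarrow> real" where
  "observation t i w = (\<lambda>k\<in>observation_coords. noise_family p0 xi (observation_noise t i k) w)"

definition selected_child :: "nat \<Rightarrow> 'a \<Rightarrow> nat" where
  "selected_child t w = argmin_index lam (\<lambda>i. xi t i 0 w)"

definition observation_increment :: "(nat \<Rightarrow> real) \<Rightarrow> real" where
  "observation_increment x = 1 / (2 * d) *
     (((Min ((\<lambda>k. x k) ` {..<lam}))\<^sup>2 + (\<Sum>k\<in>{lam..<lam + n - 1}. (x k)\<^sup>2)) / real n - 1)"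

abbreviation observation_space :: "(nat \<Rightarrow> real) measure" where
  "observation_space \<equiv> PiM observation_coords (\<lambda>_. borel)"

abbreviation observation_law :: "(nat \<Rightarrow> real) measure" where
  "observation_law \<equiv> PiM observation_coords (\<lambda>_. std_normal_measure)"

lemma finite_observation_coords[simp]: "finite observation_coords"
  by (simp add: observation_coords_def)

lemma observation_coords_nonempty: "observation_coords \<noteq> {}"
  using offspring dimension by (auto simp: observation_coords_def lessThan_empty_iff)

lemma observation_first: "k < lam \<Longrightarrow> observation t i w k = xi t k 0 w"
proof -
  assume "k < lam"
  moreover have "k < lam + n - 1" using \<open>k < lam\<close> dimension by linarith
  ultimately show ?thesis
    by (simp add: observation_def observation_coords_def observation_noise_def noise_family_def)
qed

lemma observation_tail:
  "j \<in> {1..<n} \<Longrightarrow> observation t i w (j + lam - 1) = xi t i j w"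
  by (auto simp: observation_def observation_coords_def observation_noise_def noise_family_def)

lemma measurable_observation: "i < lam \<Longrightarrow> observation t i \<in> measurable M observation_space"
  unfolding observation_def
  by (intro measurable_restrict)
     (use dimension in \<open>auto simp: observation_noise_def observation_coords_def noise_family_def intro!: measurable_xi\<close>)

lemma distr_observation: "i < lam \<Longrightarrow> distr M observation_space (observation t i) = observation_law"
proof -
  assume i: "i < lam"
  have "inj_on (observation_noise t i) observation_coords"
    by (auto simp: inj_on_def observation_noise_def observation_coords_def split: if_splits)
  moreover have noise: "observation_noise t i ` observation_coords \<subseteq> noise_index n lam"
    using i dimension by (auto simp: observation_noise_def observation_coords_def noise_index_def)
  ultimately show ?thesis
    unfolding observation_def
    by (intro distr_restrict_std_normal_eq_PiM observation_coords_nonempty finite_observation_coords)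
      (use indep_vars_reindex[OF indep_noise] std_normal_noise in auto)
qed

lemma measurable_selected_child: "selected_child t \<in> measurable M (count_space {..<lam})"
  unfolding selected_child_def[abs_def]
  by (rule measurable_argmin_index[OF offspring]) (use dimension in \<open>auto intro!: measurable_xi\<close>)

lemma selected_child_less: "selected_child t w < lam"
  using argmin_index_less[OF offspring] by (simp add: selected_child_def)

lemma measurable_selected_observation:
  "(\<lambda>w. observation t (selected_child t w) w) \<in> measurable M observation_space"
  by (rule measurable_compose_countable'[OF _ measurable_selected_child])
    (auto intro: measurable_observation)

lemma distr_selected_observation:
  "distr M observation_space (\<lambda>w. observation t (selected_child t w) w) = observation_law"
proof (rule distr_select_eq[where I="{..<lam}" and V="observation t" and S="argmin_index lam"])
  show "argmin_index lam \<in> measurable observation_space (count_space {..<lam})"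
    by (rule measurable_argmin_index[OF offspring])
      (use dimension in \<open>auto simp: observation_coords_def intro!: measurable_PiM_component_rev\<close>)
  fix w i assume "i \<in> {..<lam}"
  then show "argmin_index lam (observation t i w) = selected_child t w"
    unfolding selected_child_def by (intro argmin_index_cong) (simp add: observation_first)
qed (use offspring selected_child_less in
      \<open>auto simp: distr_observation measurable_observation measurable_selected_observation\<close>)

lemma observation_increment_eq:
  assumes "\<And>k. k < lam \<Longrightarrow> x k = v k" "\<And>j. j \<in> {1..<n} \<Longrightarrow> x (j + lam - 1) = u j"
  shows "observation_increment x =
    1 / (2 * d) * (((Min (v ` {..<lam}))\<^sup>2 + (\<Sum>j\<in>{1..<n}. (u j)\<^sup>2)) / real n - 1)"
proof -
  have "(\<lambda>k. x k) ` {..<lam} = v ` {..<lam}" using assms(1) by auto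
  moreover have "(\<Sum>k\<in>{lam..<lam + n - 1}. (x k)\<^sup>2) = (\<Sum>j\<in>{1..<n}. (u j)\<^sup>2)"
  proof (rule sum.reindex_bij_witness[of _ "\<lambda>j. j + lam - 1" "\<lambda>k. k - lam + 1"])
    fix k assume "k \<in> {lam..<lam + n - 1}"
    then show "(u (k - lam + 1))\<^sup>2 = (x k)\<^sup>2" using assms(2)[of "k - lam + 1"] by auto
  qed auto
  ultimately show ?thesis unfolding observation_increment_def by simp
qed

lemma log_increment_eq_selected_observation:
  "log_increment t w = observation_increment (observation t (selected_child t w) w)"
proof -
  let ?s = "selected_child t w"
  have "observation_increment (observation t ?s w) = 1 / (2 * d) *
      (((Min ((\<lambda>k. xi t k 0 w) ` {..<lam}))\<^sup>2 + (\<Sum>j\<in>{1..<n}. (xi t ?s j w)\<^sup>2)) / real n - 1)"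
    by (rule observation_increment_eq) (simp add: observation_first, rule observation_tail)
  also have "Min ((\<lambda>k. xi t k 0 w) ` {..<lam}) = xi t ?s 0 w"
    using argmin_index_eq_Min[OF offspring, of "\<lambda>k. xi t k 0 w"] by (simp add: selected_child_def)
  also have "(xi t ?s 0 w)\<^sup>2 + (\<Sum>j\<in>{1..<n}. (xi t ?s j w)\<^sup>2) = (\<Sum>j<n. (xi t ?s j w)\<^sup>2)"
  proof -
    have "{..<n} = insert 0 {1..<n}" using dimension by auto
    then show ?thesis by simp
  qed
  finally show ?thesis
    by (simp add: log_increment_def csa_log_increment_def selected_child_def)
qed

lemma observation_increment_unselected:
  "observation_increment (observation t 0 w) = 1 / (2 * d) *
     (((Min ((\<lambda>k. xi t k 0 w) ` {..<lam}))\<^sup>2 + (\<Sum>j\<in>{1..<n}. (xi t 0 j w)\<^sup>2)) / real n - 1)"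
  by (rule observation_increment_eq) (simp add: observation_first, rule observation_tail)

lemma measurable_observation_increment: "observation_increment \<in> borel_measurable observation_space"
proof -
  have "\<And>k. k < lam \<Longrightarrow> k \<in> observation_coords" "\<And>k. k \<in> {lam..<lam + n - 1} \<Longrightarrow> k \<in> observation_coords"
    using dimension by (auto simp: observation_coords_def)
  then show ?thesis
    unfolding observation_increment_def[abs_def] by measurable
qed

lemma distr_log_increment:
  "distr M borel (log_increment t) = distr observation_law borel observation_increment"
proof -
  have "log_increment t = observation_increment \<circ> (\<lambda>w. observation t (selected_child t w) w)"
    by (auto simp: fun_eq_iff log_increment_eq_selected_observation)
  then have "distr M borel (log_increment t) =
      distr (distr M observation_space (\<lambda>w. observation t (selected_child t w) w)) borel observation_increment"
    using distr_distr[OF measurable_observation_increment measurable_selected_observation] by simp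
  then show ?thesis by (simp add: distr_selected_observation)
qed

lemma distr_log_increment_eq_unselected:
  "distr M borel (log_increment t) = distr M borel (\<lambda>w. observation_increment (observation t 0 w))"
proof -
  have "distr M borel (\<lambda>w. observation_increment (observation t 0 w)) =
      distr (distr M observation_space (observation t 0)) borel observation_increment"
    using offspring by (simp add: distr_distr[OF measurable_observation_increment measurable_observation]
        comp_def)
  then show ?thesis using offspring by (simp add: distr_observation distr_log_increment)
qed

lemma
  fixes g :: "real \<Rightarrow> real"
  assumes g: "g \<in> borel_measurable borel"
  shows integral_log_increment_eq_unselected:
      "expectation (\<lambda>w. g (log_increment t w)) = expectation (\<lambda>w. g (observation_increment (observation t 0 w)))"
    and integrable_log_increment_iff_unselected:
      "integrable M (\<lambda>w. g (log_increment t w)) \<longleftrightarrow>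
       integrable M (\<lambda>w. g (observation_increment (observation t 0 w)))"
proof -
  have unselected: "(\<lambda>w. observation_increment (observation t 0 w)) \<in> borel_measurable M"
    using measurable_comp[OF measurable_observation measurable_observation_increment] offspring
    by (simp add: comp_def)
  show "expectation (\<lambda>w. g (log_increment t w)) = expectation (\<lambda>w. g (observation_increment (observation t 0 w)))"
    using integral_distr[OF measurable_log_increment g] integral_distr[OF unselected g]
    by (simp add: distr_log_increment_eq_unselected)
  show "integrable M (\<lambda>w. g (log_increment t w)) \<longleftrightarrow>
      integrable M (\<lambda>w. g (observation_increment (observation t 0 w)))"
    using integrable_distr_eq[OF measurable_log_increment g] integrable_distr_eq[OF unselected g]
    by (simp add: distr_log_increment_eq_unselected)
qed

lemma integral_log_increment_eq_0:
  fixes g :: "real \<Rightarrow> real"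
  assumes "g \<in> borel_measurable borel"
  shows "expectation (\<lambda>w. g (log_increment t w)) = expectation (\<lambda>w. g (log_increment 0 w))"
  using integral_distr[OF measurable_log_increment assms, of t]
    integral_distr[OF measurable_log_increment assms, of 0]
  by (simp add: distr_log_increment)

lemma expectation_log_increment:
  "expectation (log_increment t) = (E_min_normal_sq lam - 1) / (2 * d * real n)"
proof -
  interpret std_normal_sample M "\<lambda>i. xi t i 0" lam by (rule std_normal_sample_first_coordinates)
  let ?m = "\<lambda>w. Min ((\<lambda>k. xi t k 0 w) ` {..<lam})"
  have xi_square: "integrable M (\<lambda>w. (xi t 0 j w)\<^sup>2)" "expectation (\<lambda>w. (xi t 0 j w)\<^sup>2) = 1"
    if "j \<in> {1..<n}" for j
    using that offspring integrable_std_normal_power[OF distributed_xi, of 0 j t 2]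
      expectation_std_normal_square[OF distributed_xi, of 0 j t] by auto
  have m_square: "integrable M (\<lambda>w. (?m w)\<^sup>2)"
    using integrable_sample_min_square by (simp add: sample_min_def)
  have "expectation (log_increment t) = expectation (\<lambda>w. observation_increment (observation t 0 w))"
    using integral_log_increment_eq_unselected[of "\<lambda>x. x" t] by simp
  also have "\<dots> = 1 / (2 * d) * ((expectation (\<lambda>w. (?m w)\<^sup>2) +
      (\<Sum>j\<in>{1..<n}. expectation (\<lambda>w. (xi t 0 j w)\<^sup>2))) / real n - 1)"
  proof -
    have sum: "integrable M (\<lambda>w. \<Sum>j\<in>{1..<n}. (xi t 0 j w)\<^sup>2)"
      using xi_square by (intro Bochner_Integration.integrable_sum) auto
    then have "(\<integral>w. (?m w)\<^sup>2 + (\<Sum>j\<in>{1..<n}. (xi t 0 j w)\<^sup>2) \<partial>M) =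
        expectation (\<lambda>w. (?m w)\<^sup>2) + (\<Sum>j\<in>{1..<n}. expectation (\<lambda>w. (xi t 0 j w)\<^sup>2))"
      using m_square xi_square by (simp add: Bochner_Integration.integral_sum)
    moreover have "integrable M (\<lambda>w. (?m w)\<^sup>2 + (\<Sum>j\<in>{1..<n}. (xi t 0 j w)\<^sup>2))"
      using m_square sum by simp
    ultimately show ?thesis by (simp add: observation_increment_unselected prob_space)
  qed
  also have "\<dots> = (E_min_normal_sq lam - 1) / (2 * d * real n)"
    using dimension damping xi_square
    by (simp add: expectation_Min_first_coordinates_square field_simps)
  finally show ?thesis .
qed

lemma observation_increment_abs_le:
  "\<bar>observation_increment x\<bar> \<le> 1 / (2 * d) * ((\<Sum>k\<in>observation_coords. (x k)\<^sup>2) + 1)"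
proof -
  let ?A = "(Min ((\<lambda>k. x k) ` {..<lam}))\<^sup>2 + (\<Sum>k\<in>{lam..<lam + n - 1}. (x k)\<^sup>2)"
  have "{..<lam} \<noteq> {}" using offspring by (auto simp: lessThan_empty_iff)
  then have "Min ((\<lambda>k. x k) ` {..<lam}) \<in> (\<lambda>k. x k) ` {..<lam}" by (intro Min_in) auto
  then obtain k0 where k0: "k0 < lam" "Min ((\<lambda>k. x k) ` {..<lam}) = x k0" by auto
  then have "?A = (\<Sum>k\<in>insert k0 {lam..<lam + n - 1}. (x k)\<^sup>2)" by simp
  also have "\<dots> \<le> (\<Sum>k\<in>observation_coords. (x k)\<^sup>2)"
    by (rule sum_mono2) (use k0 dimension in \<open>auto simp: observation_coords_def\<close>)
  finally have "?A \<le> (\<Sum>k\<in>observation_coords. (x k)\<^sup>2)" .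
  moreover have "0 \<le> ?A" by (simp add: sum_nonneg)
  moreover from this have "?A / real n \<le> ?A"
    using dimension divide_left_mono[of 1 "real n" ?A] by simp
  moreover have "0 \<le> ?A / real n" by (simp add: sum_nonneg)
  ultimately have "\<bar>?A / real n - 1\<bar> \<le> (\<Sum>k\<in>observation_coords. (x k)\<^sup>2) + 1" by linarith
  then show ?thesis
    using damping unfolding observation_increment_def by (simp add: abs_mult divide_right_mono)
qed

lemma distributed_observation_coordinate:
  assumes "i < lam" "k \<in> observation_coords"
  shows "distributed M lborel (\<lambda>w. observation t i w k) (\<lambda>x. ennreal (std_normal_density x))"
proof -
  have "observation_noise t i k \<in> noise_index n lam"
    using assms dimension by (auto simp: observation_noise_def observation_coords_def noise_index_def)
  then show ?thesis using assms std_normal_noise by (simp add: observation_def)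
qed

lemma integrable_log_increment_power4: "integrable M (\<lambda>w. log_increment t w ^ 4)"
proof -
  let ?C = "(1 / (2 * d)) ^ 4 * (real (card observation_coords) + 1) ^ 4"
  let ?bound = "\<lambda>w. ?C * (1 + (\<Sum>k\<in>observation_coords. ((observation t 0 w k)\<^sup>2) ^ 4))"
  have "integrable M (\<lambda>w. (observation_increment (observation t 0 w)) ^ 4)"
  proof (rule Bochner_Integration.integrable_bound)
    have "integrable M (\<lambda>w. ((observation t 0 w k)\<^sup>2) ^ 4)" if "k \<in> observation_coords" for k
      using integrable_std_normal_power[OF distributed_observation_coordinate[OF _ that], of 0 t 8]
        offspring by (simp add: power_mult[symmetric])
    then show "integrable M ?bound" by (simp add: Bochner_Integration.integrable_sum)
    show "(\<lambda>w. (observation_increment (observation t 0 w)) ^ 4) \<in> borel_measurable M"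
      using measurable_comp[OF measurable_observation measurable_observation_increment] offspring
      by (simp add: comp_def)
    show "AE w in M. norm ((observation_increment (observation t 0 w)) ^ 4) \<le> norm (?bound w)"
    proof (intro always_eventually allI)
      fix w
      let ?x = "observation t 0 w"
      have "\<bar>observation_increment ?x\<bar> ^ 4 \<le> (1 / (2 * d) * ((\<Sum>k\<in>observation_coords. (?x k)\<^sup>2) + 1)) ^ 4"
        by (rule power_mono[OF observation_increment_abs_le]) simp
      also have "\<dots> = (1 / (2 * d)) ^ 4 * ((\<Sum>k\<in>observation_coords. (?x k)\<^sup>2) + 1) ^ 4"
        by (rule power_mult_distrib)
      also have "\<dots> \<le> ?bound w"
        unfolding mult.assoc by (rule mult_left_mono[OF sum_plus_one_power4_le]) auto
      finally show "norm ((observation_increment ?x) ^ 4) \<le> norm (?bound w)"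
        using damping by (simp add: power_abs sum_nonneg)
    qed
  qed
  then show ?thesis using integrable_log_increment_iff_unselected[of "\<lambda>x. x ^ 4" t] by simp
qed

lemma AE_average_log_increment:
  "AE w in M. (\<lambda>t. (\<Sum>s<t. log_increment s w) / real t) \<longlonglongrightarrow> (E_min_normal_sq lam - 1) / (2 * d * real n)"
proof -
  define \<mu> where "\<mu> = (E_min_normal_sq lam - 1) / (2 * d * real n)"
  define Y where "Y t w = log_increment t w - \<mu>" for t w
  have "integrable M (\<lambda>w. Y t w ^ 4)" for t
  proof (rule Bochner_Integration.integrable_bound)
    show "integrable M (\<lambda>w. 8 * (log_increment t w ^ 4 + (- \<mu>) ^ 4))"
      using integrable_log_increment_power4[of t] by simp
    show "AE w in M. norm (Y t w ^ 4) \<le> norm (8 * (log_increment t w ^ 4 + (- \<mu>) ^ 4))"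
      using power4_add_le[of "log_increment t _" "- \<mu>"]
      by (intro always_eventually allI) (simp add: Y_def zero_le_even_power)
  qed (simp add: Y_def)
  moreover have "indep_vars (\<lambda>_. borel) Y UNIV"
    unfolding Y_def by (rule indep_vars_compose2[OF indep_vars_log_increment]) simp
  moreover have "expectation (Y t) = 0" for t
    using integrable_power_le_4[OF measurable_log_increment integrable_log_increment_power4, of 1 t]
    unfolding Y_def by (simp add: expectation_log_increment \<mu>_def prob_space)
  moreover have "expectation (\<lambda>w. (Y t w)\<^sup>2) \<le> expectation (\<lambda>w. (Y 0 w)\<^sup>2)"
    "expectation (\<lambda>w. Y t w ^ 4) \<le> expectation (\<lambda>w. Y 0 w ^ 4)" for t
    unfolding Y_def using integral_log_increment_eq_0[of "\<lambda>x. (x - \<mu>)\<^sup>2" t]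
      integral_log_increment_eq_0[of "\<lambda>x. (x - \<mu>) ^ 4" t] by simp_all
  ultimately have "AE w in M. (\<lambda>t. (\<Sum>s<t. Y s w) / real t) \<longlonglongrightarrow> 0"
    by (intro strong_law_bounded_fourth_moment)
  then show ?thesis
  proof (rule eventually_mono)
    fix w assume "(\<lambda>t. (\<Sum>s<t. Y s w) / real t) \<longlonglongrightarrow> 0"
    then have "(\<lambda>t. (\<Sum>s<t. Y s w) / real t + \<mu>) \<longlonglongrightarrow> \<mu>"
      using tendsto_add[OF _ tendsto_const[of \<mu>]] by fastforce
    moreover have "\<forall>\<^sub>F t in sequentially. (\<Sum>s<t. Y s w) / real t + \<mu> = (\<Sum>s<t. log_increment s w) / real t"
      by (intro eventually_sequentiallyI[of 1]) (simp add: Y_def sum_subtractf field_simps)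
    ultimately show "(\<lambda>t. (\<Sum>s<t. log_increment s w) / real t) \<longlonglongrightarrow> (E_min_normal_sq lam - 1) / (2 * d * real n)"
      unfolding \<mu>_def by (rule Lim_transform_eventually)
  qed
qed

lemma distr_log_increment_offspring_1:
  assumes "lam = 1"
  shows "distr M borel (log_increment t) =
    distr (std_normal_prod n) borel (\<lambda>x. 1 / (2 * d) * ((\<Sum>j<n. (x j)\<^sup>2) / real n - 1))"
proof -
  have "observation_increment x = 1 / (2 * d) * ((\<Sum>j<n. (x j)\<^sup>2) / real n - 1)" for x
  proof -
    have "{..<n} = insert 0 {1..<n}" "{..<1::nat} = {0}" using dimension by auto
    then show ?thesis unfolding observation_increment_def using assms by simp
  qed
  moreover have "observation_coords = {..<n}" unfolding observation_coords_def using assms by simp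
  ultimately show ?thesis
    unfolding distr_log_increment std_normal_prod_def by (intro distr_cong) auto
qed

lemma distr_log_increment_offspring_2:
  assumes "lam = 2"
  shows "distr M borel (log_increment t) =
    distr (std_normal_prod (n + 1)) borel
      (\<lambda>x. 1 / (2 * d) * (((min (x 0) (x 1))\<^sup>2 + (\<Sum>j\<in>{2..<n+1}. (x j)\<^sup>2)) / real n - 1))"
proof -
  have "observation_increment x =
      1 / (2 * d) * (((min (x 0) (x 1))\<^sup>2 + (\<Sum>j\<in>{2..<n+1}. (x j)\<^sup>2)) / real n - 1)" for x
  proof -
    have "{..<2::nat} = {0, 1}" "{lam..<lam + n - 1} = {2..<n+1}" using assms dimension by auto
    then show ?thesis unfolding observation_increment_def using assms by simp
  qed
  moreover have "observation_coords = {..<n + 1}" unfolding observation_coords_def using assms by simp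
  ultimately show ?thesis
    unfolding distr_log_increment std_normal_prod_def by (intro distr_cong) auto
qed

end

theorem theorem1:
  fixes M :: "'a measure" and n lam :: nat and d s0 :: real
    and X0 :: "nat \<Rightarrow> real"
    and p0 :: "nat \<Rightarrow> 'a \<Rightarrow> real" and xi :: "nat \<Rightarrow> nat \<Rightarrow> nat \<Rightarrow> 'a \<Rightarrow> real"
  assumes "prob_space M" and "n \<ge> 1" and "lam \<ge> 1" and "d > 0" and "s0 > 0"
    and "prob_space.indep_vars M (\<lambda>_. borel) (noise_family p0 xi) (noise_index n lam)"
    and "\<And>k. k \<in> noise_index n lam \<Longrightarrow>
           distributed M lborel (noise_family p0 xi k) (\<lambda>x. ennreal (std_normal_density x))"
  defines "\<sigma> \<equiv> csa_sigma n lam 1 d (\<lambda>x. x 0) X0 s0 p0 xi"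
    and "W \<equiv> (\<lambda>t w. ln (csa_sigma n lam 1 d (\<lambda>x. x 0) X0 s0 p0 xi (Suc t) w)
                   - ln (csa_sigma n lam 1 d (\<lambda>x. x 0) X0 s0 p0 xi t w))"
  shows
    "(lam \<ge> 3 \<longrightarrow>
       (AE w in M. (\<lambda>t. ln (\<sigma> t w / s0) / real t)
           \<longlonglongrightarrow> (E_min_normal_sq lam - 1) / (2 * d * real n))
     \<and> (\<forall>t. prob_space.expectation M (\<lambda>w. ln (\<sigma> (Suc t) w / \<sigma> t w))
             = (E_min_normal_sq lam - 1) / (2 * d * real n))
     \<and> (E_min_normal_sq lam - 1) / (2 * d * real n) > 0)
   \<and> (lam = 1 \<longrightarrow>
       (\<forall>t w. ln (\<sigma> (Suc t) w) = ln (\<sigma> t w) + W t w)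
     \<and> prob_space.indep_vars M (\<lambda>_. borel) W UNIV
     \<and> (\<forall>t. prob_space.expectation M (W t) = 0)
     \<and> (\<forall>t. distr M borel (W t) =
            distr (std_normal_prod n) borel
              (\<lambda>x. 1 / (2 * d) * ((\<Sum>j<n. (x j)\<^sup>2) / real n - 1))))
   \<and> (lam = 2 \<longrightarrow>
       (\<forall>t w. ln (\<sigma> (Suc t) w) = ln (\<sigma> t w) + W t w)
     \<and> prob_space.indep_vars M (\<lambda>_. borel) W UNIV
     \<and> (\<forall>t. prob_space.expectation M (W t) = 0)
     \<and> (\<forall>t. distr M borel (W t) =
            distr (std_normal_prod (n + 1)) borel
              (\<lambda>x. 1 / (2 * d) *
                 (((min (x 0) (x 1))\<^sup>2 + (\<Sum>j\<in>{2..<n+1}. (x j)\<^sup>2)) / real n - 1))))"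
proof -
  interpret csa_noise M n lam d p0 xi
    unfolding csa_noise_def csa_noise_axioms_def using assms(1-7) by auto
  have W_eq: "W = log_increment"
    by (simp add: fun_eq_iff W_def log_increment_def ln_csa_sigma_Suc[OF assms(5,3)])
  have increment: "ln (\<sigma> (Suc t) w / \<sigma> t w) = log_increment t w" for t w
    unfolding \<sigma>_def log_increment_def ln_csa_sigma_div[OF assms(5,3)] ln_csa_sigma_Suc[OF assms(5,3)]
    by simp
  have average: "ln (\<sigma> t w / s0) = (\<Sum>s<t. log_increment s w)" for t w
    unfolding \<sigma>_def log_increment_def by (rule ln_csa_sigma_div_s0[OF assms(5,3)])
  have walk: "ln (\<sigma> (Suc t) w) = ln (\<sigma> t w) + log_increment t w" for t w
    unfolding \<sigma>_def log_increment_def by (rule ln_csa_sigma_Suc[OF assms(5,3)])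
  have mean_zero: "lam = 1 \<or> lam = 2 \<Longrightarrow> expectation (log_increment t) = 0" for t
    using E_min_normal_sq_eq_1 by (auto simp: expectation_log_increment)
  have rate_pos: "lam \<ge> 3 \<Longrightarrow> (E_min_normal_sq lam - 1) / (2 * d * real n) > 0"
    using E_min_normal_sq_gt_1 assms(2,4) by simp
  show ?thesis
    unfolding W_eq increment average
    using AE_average_log_increment expectation_log_increment rate_pos walk mean_zero
      indep_vars_log_increment distr_log_increment_offspring_1 distr_log_increment_offspring_2
    by blast
qed

end
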